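(* The diagram of graded algebra morphisms \[\Delta^{\mathcal{W},\mathrm{DR}}\circ\beta_1=\beta_2\circ\mathrm{gr}(\Delta^{\mathcal{W},\mathrm{B}}):\ \mathrm{gr}(\mathcal{W}^{\mathrm{B}})\to\mathcal{W}^{\mathrm{DR}}\otimes\mathcal{W}^{\mathrm{DR}}\] commutes, where $\beta_1:\mathrm{gr}(\mathcal{W}^{\mathrm{B}})\xrightarrow{\sim}\mathcal{W}^{\mathrm{DR}}$ and $\beta_2:\mathrm{gr}(\mathcal{W}^{\mathrm{B}}\otimes\mathcal{W}^{\mathrm{B}})\xrightarrow{\sim}\mathcal{W}^{\mathrm{DR}}\otimes\mathcal{W}^{\mathrm{DR}}$ are the isomorphisms induced by $\mathrm{gr}\,\mathcal{V}^{\mathrm{B}}\cong\mathcal{V}^{\mathrm{DR}}$.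
   Context: $\mathbf{k}$ is a commutative $\mathbb{Q}$-algebra. $F_2$ free on $X_0,X_1$, $\mathcal{V}^{\mathrm{B}}=\mathbf{k}F_2$ filtered by powers of the augmentation ideal; $\mathfrak{f}_2$ free graded Lie algebra on $e_0,e_1$ (degree 1), $\mathcal{V}^{\mathrm{DR}}=U(\mathfrak{f}_2)$; $\mathrm{gr}\,\mathcal{V}^{\mathrm{B}}\cong\mathcal{V}^{\mathrm{DR}}$ via $[X_i-1]_1\mapsto e_i$ (known). $\mathcal{W}^{\mathrm{B}}=\mathbf{k}\oplus\mathcal{V}^{\mathrm{B}}(X_1-1)$, a subalgebra generated by $X_1^{-1}$ and $X_0^n(X_1-1)$ ($n\in\mathbb{Z}$), with filtration induced from $\mathcal{V}^{\mathrm{B}}$, and $\mathcal{W}^{\mathrm{B}}\otimes\mathcal{W}^{\mathrm{B}}$ with the tensor product filtration $F^n=\sum_{i+j=n}F^i\otimes F^j$; $\mathcal{W}^{\mathrm{DR}}=\mathbf{k}\oplus\mathcal{V}^{\mathrm{DR}}e_1$, freely generated by $e_0^ne_1$ ($n\ge0$). It is known that the isomorphism $\mathrm{gr}\,\mathcal{V}^{\mathrm{B}}\cong\mathcal{V}^{\mathrm{DR}}$ induces graded algebra isomorphisms $\beta_1,\beta_2$ as in the claim. $\Delta^{\mathcal{W},\mathrm{B}}:\mathcal{W}^{\mathrm{B}}\to\mathcal{W}^{\mathrm{B}}\otimes\mathcal{W}^{\mathrm{B}}$ is the filtered algebra morphism with $X_1^{-1}\mapsto X_1^{-1}\otimes X_1^{-1}$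 and $X_0^n(X_1-1)\mapsto X_0^n(X_1-1)\otimes1+1\otimes X_0^n(X_1-1)-\sum_{k=1}^{n-1}X_0^k(X_1-1)\otimes X_0^{n-k}(X_1-1)$ ($n\in\mathbb{Z}$; convention $\sum_{k=p}^q f(k)$ equals $f(p)+\dots+f(q)$ if $q>p-1$, $0$ if $q=p-1$, $-f(p-1)-\dots-f(q+1)$ if $q<p-1$). $\Delta^{\mathcal{W},\mathrm{DR}}:\mathcal{W}^{\mathrm{DR}}\to\mathcal{W}^{\mathrm{DR}}\otimes\mathcal{W}^{\mathrm{DR}}$ is the algebra morphism with $e_0^ne_1\mapsto e_0^ne_1\otimes1+1\otimes e_0^ne_1-\sum_{k=0}^{n-1}e_0^ke_1\otimes e_0^{n-k-1}e_1$. $\mathrm{gr}$ denotes the associated graded ($\mathrm{gr}_n=F^n/F^{n+1}$) of filtered objects and morphisms. *)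

theory Defs
  imports Main "HOL-Library.Poly_Mapping"
begin

text \<open>A letter is (i, inv): i = False means X0, i = True means X1;
  inv = True means the inverse letter.\<close>
type_synonym letter = "bool \<times> bool"

fun red_cons :: "letter \<Rightarrow> letter list \<Rightarrow> letter list" where
  "red_cons a [] = [a]"
| "red_cons a (b # zs) = (if fst a = fst b \<and> snd a \<noteq> snd b then zs else a # b # zs)"

definition red :: "letter list \<Rightarrow> letter list" where
  "red xs = foldr red_cons xs []"

definition reduced :: "letter list \<Rightarrow> bool" where
  "reduced w \<longleftrightarrow> red w = w"

definition conv :: "('a \<Rightarrow> 'a \<Rightarrow> 'a) \<Rightarrow> ('a \<Rightarrow>\<^sub>0 'k::comm_ring_1) \<Rightarrow> ('a \<Rightarrow>\<^sub>0 'k) \<Rightarrow> ('a \<Rightarrow>\<^sub>0 'k)" where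
  "conv op f g = (\<Sum>u\<in>Poly_Mapping.keys f. \<Sum>v\<in>Poly_Mapping.keys g. Poly_Mapping.single (op u v) (Poly_Mapping.lookup f u * Poly_Mapping.lookup g v))"

definition smult :: "'k::comm_ring_1 \<Rightarrow> ('a \<Rightarrow>\<^sub>0 'k) \<Rightarrow> ('a \<Rightarrow>\<^sub>0 'k)" where
  "smult c f = Poly_Mapping.map (\<lambda>x. c * x) f"

definition tens :: "('a \<Rightarrow>\<^sub>0 'k::comm_ring_1) \<Rightarrow> ('a \<Rightarrow>\<^sub>0 'k) \<Rightarrow> ('a \<times> 'a \<Rightarrow>\<^sub>0 'k)" where
  "tens f g = (\<Sum>u\<in>Poly_Mapping.keys f. \<Sum>v\<in>Poly_Mapping.keys g. Poly_Mapping.single (u, v) (Poly_Mapping.lookup f u * Poly_Mapping.lookup g v))"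

inductive_set addspan :: "('a::monoid_add) set \<Rightarrow> 'a set" for S where
  zero: "0 \<in> addspan S"
| gen: "x \<in> S \<Longrightarrow> x \<in> addspan S"
| add: "x \<in> addspan S \<Longrightarrow> y \<in> addspan S \<Longrightarrow> x + y \<in> addspan S"

definition prodspan :: "('a \<Rightarrow> 'a \<Rightarrow> 'a::monoid_add) \<Rightarrow> 'a set \<Rightarrow> 'a set \<Rightarrow> 'a set" where
  "prodspan m A B = addspan {m a b | a b. a \<in> A \<and> b \<in> B}"

section \<open>Betti side: V^B = k F2, W^B, filtrations, tensor square\<close>

definition VB :: "(letter list \<Rightarrow>\<^sub>0 'k::comm_ring_1) set" where
  "VB = {f. \<forall>u\<in>Poly_Mapping.keys f. reduced u}"

definition mulB :: "(letter list \<Rightarrow>\<^sub>0 'k::comm_ring_1) \<Rightarrow> _ \<Rightarrow> _" where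
  "mulB = conv (\<lambda>u v. red (u @ v))"

definition oneB :: "letter list \<Rightarrow>\<^sub>0 'k::comm_ring_1" where
  "oneB = Poly_Mapping.single [] 1"

definition X1 :: "letter list \<Rightarrow>\<^sub>0 'k::comm_ring_1" where
  "X1 = Poly_Mapping.single [(True, False)] 1"

definition X1inv :: "letter list \<Rightarrow>\<^sub>0 'k::comm_ring_1" where
  "X1inv = Poly_Mapping.single [(True, True)] 1"

definition X0pow :: "int \<Rightarrow> letter list \<Rightarrow>\<^sub>0 'k::comm_ring_1" where
  "X0pow n = Poly_Mapping.single (replicate (nat \<bar>n\<bar>) (False, n < 0)) 1"

definition genB :: "int \<Rightarrow> letter list \<Rightarrow>\<^sub>0 'k::comm_ring_1" where
  "genB n = mulB (X0pow n) (X1 - oneB)"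

definition augm :: "(letter list \<Rightarrow>\<^sub>0 'k::comm_ring_1) \<Rightarrow> 'k" where
  "augm f = (\<Sum>u\<in>Poly_Mapping.keys f. Poly_Mapping.lookup f u)"

definition augI :: "(letter list \<Rightarrow>\<^sub>0 'k::comm_ring_1) set" where
  "augI = {f \<in> VB. augm f = 0}"

fun filV :: "nat \<Rightarrow> (letter list \<Rightarrow>\<^sub>0 'k::comm_ring_1) set" where
  "filV 0 = VB"
| "filV (Suc n) = prodspan mulB augI (filV n)"

definition WB :: "(letter list \<Rightarrow>\<^sub>0 'k::comm_ring_1) set" where
  "WB = {smult c oneB + mulB y (X1 - oneB) | c y. y \<in> VB}"

definition filW :: "nat \<Rightarrow> (letter list \<Rightarrow>\<^sub>0 'k::comm_ring_1) set" where
  "filW n = WB \<inter> filV n"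

text \<open>W^B \<otimes> W^B, realised inside k[F2 \<times> F2] = V^B \<otimes> V^B, with the tensor product
  filtration F^n = sum over i+j=n of F^i \<otimes> F^j.\<close>
definition WWB :: "(letter list \<times> letter list \<Rightarrow>\<^sub>0 'k::comm_ring_1) set" where
  "WWB = addspan {tens a b | a b. a \<in> WB \<and> b \<in> WB}"

definition filWW :: "nat \<Rightarrow> (letter list \<times> letter list \<Rightarrow>\<^sub>0 'k::comm_ring_1) set" where
  "filWW n = addspan {tens a b | a b i j. i + j = n \<and> a \<in> filW i \<and> b \<in> filW j}"

definition mulBB :: "(letter list \<times> letter list \<Rightarrow>\<^sub>0 'k::comm_ring_1) \<Rightarrow> _ \<Rightarrow> _" where
  "mulBB = conv (\<lambda>(a, b) (c, d). (red (a @ c), red (b @ d)))"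

definition csum :: "int \<Rightarrow> int \<Rightarrow> (int \<Rightarrow> 'a::ab_group_add) \<Rightarrow> 'a" where
  "csum p q f = (if q \<ge> p - 1 then (\<Sum>k\<in>{p..q}. f k) else - (\<Sum>k\<in>{q+1..p-1}. f k))"

section \<open>de Rham side: V^DR = U(f2) = free algebra on e0, e1\<close>

text \<open>Words in e0 (False), e1 (True).\<close>
definition mulD :: "(bool list \<Rightarrow>\<^sub>0 'k::comm_ring_1) \<Rightarrow> _ \<Rightarrow> _" where
  "mulD = conv (@)"

definition mulDD :: "(bool list \<times> bool list \<Rightarrow>\<^sub>0 'k::comm_ring_1) \<Rightarrow> _ \<Rightarrow> _" where
  "mulDD = conv (\<lambda>(a, b) (c, d). (a @ c, b @ d))"

definition oneD :: "bool list \<Rightarrow>\<^sub>0 'k::comm_ring_1" where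
  "oneD = Poly_Mapping.single [] 1"

definition e1 :: "bool list \<Rightarrow>\<^sub>0 'k::comm_ring_1" where
  "e1 = Poly_Mapping.single [True] 1"

definition genD :: "nat \<Rightarrow> bool list \<Rightarrow>\<^sub>0 'k::comm_ring_1" where
  "genD n = Poly_Mapping.single (replicate n False @ [True]) 1"

definition WDR :: "(bool list \<Rightarrow>\<^sub>0 'k::comm_ring_1) set" where
  "WDR = {smult c oneD + mulD y e1 | c y. True}"

text \<open>Coefficient of the word w in the Magnus expansion X_i \<mapsto> 1 + e_i,
  X_i^{-1} \<mapsto> sum_k (-e_i)^k of a group word.  The degree-n part of this expansion
  of an element of F^n is the image of its class under gr_n V^B = V^DR_n
  (which sends [X_i - 1]_1 to e_i).\<close>
fun magc :: "letter list \<Rightarrow> bool list \<Rightarrow> 'k::comm_ring_1" where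
  "magc [] w = (if w = [] then 1 else 0)"
| "magc (a # g) w =
     (if snd a then (\<Sum>k\<in>{0..length w}. if take k w = replicate k (fst a)
                                          then (-1) ^ k * magc g (drop k w) else 0)
      else magc g w + (case w of [] \<Rightarrow> 0 | b # w' \<Rightarrow> if b = fst a then magc g w' else 0))"

definition beta1 :: "nat \<Rightarrow> (letter list \<Rightarrow>\<^sub>0 'k::comm_ring_1) \<Rightarrow> (bool list \<Rightarrow>\<^sub>0 'k)" where
  "beta1 n f = (\<Sum>w\<in>{w. length w = n}.
       Poly_Mapping.single w (\<Sum>u\<in>Poly_Mapping.keys f. Poly_Mapping.lookup f u * magc u w))"

definition beta2 :: "nat \<Rightarrow> (letter list \<times> letter list \<Rightarrow>\<^sub>0 'k::comm_ring_1)
                        \<Rightarrow> (bool list \<times> bool list \<Rightarrow>\<^sub>0 'k)" where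
  "beta2 n f = (\<Sum>p\<in>{(u, v). length u + length v = n}.
       Poly_Mapping.single p (\<Sum>q\<in>Poly_Mapping.keys f. Poly_Mapping.lookup f q * magc (fst q) (fst p) * magc (snd q) (snd p)))"

definition is_DeltaB :: "((letter list \<Rightarrow>\<^sub>0 'k::comm_ring_1) \<Rightarrow> (letter list \<times> letter list \<Rightarrow>\<^sub>0 'k)) \<Rightarrow> bool" where
  "is_DeltaB D \<longleftrightarrow>
     (\<forall>x\<in>WB. \<forall>y\<in>WB. D (x + y) = D x + D y \<and> D (mulB x y) = mulBB (D x) (D y)) \<and>
     (\<forall>c. \<forall>x\<in>WB. D (smult c x) = smult c (D x)) \<and>
     D oneB = tens oneB oneB \<and>
     D X1inv = tens X1inv X1inv \<and>
     (\<forall>n::int. D (genB n) = tens (genB n) oneB + tens oneB (genB n)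
                            - csum 1 (n - 1) (\<lambda>k. tens (genB k) (genB (n - k)))) \<and>
     (\<forall>n. \<forall>x\<in>filW n. D x \<in> filWW n)"

definition is_DeltaDR :: "((bool list \<Rightarrow>\<^sub>0 'k::comm_ring_1) \<Rightarrow> (bool list \<times> bool list \<Rightarrow>\<^sub>0 'k)) \<Rightarrow> bool" where
  "is_DeltaDR D \<longleftrightarrow>
     (\<forall>x\<in>WDR. \<forall>y\<in>WDR. D (x + y) = D x + D y \<and> D (mulD x y) = mulDD (D x) (D y)) \<and>
     (\<forall>c. \<forall>x\<in>WDR. D (smult c x) = smult c (D x)) \<and>
     D oneD = tens oneD oneD \<and>
     (\<forall>n. D (genD n) = tens (genD n) oneD + tens oneD (genD n)
                       - (\<Sum>k<n. tens (genD k) (genD (n - k - 1))))"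

end

theory Submission
  imports Defs
begin

text \<open>
  Both sides are read off the Magnus expansion \<open>X\<^sub>i \<mapsto> 1 + e\<^sub>i\<close>. The augmentation
  filtration of \<open>k F\<^sub>2\<close> is exactly the filtration by the order of vanishing of this expansion,
  so \<open>\<beta>\<^sub>1\<close> and \<open>\<beta>\<^sub>2\<close> take the homogeneous part of degree \<open>n\<close> of the expansion.
  Modulo \<open>F\<^sup>n\<^sup>+\<^sup>1\<close>, every element of \<open>F\<^sup>n W\<^sup>B\<close> is a linear combination of products of the
  elements \<open>(X\<^sub>0 - 1)\<^sup>m (X\<^sub>1 - 1)\<close>, whose expansions are the words \<open>e\<^sub>0\<^sup>m e\<^sub>1\<close>. For such a
  factor, the degree \<open>m + 1\<close> part of its image under \<open>\<Delta>\<^sup>B\<close> is computed from the defining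
  formula for \<open>\<Delta>\<^sup>B(X\<^sub>0\<^sup>k (X\<^sub>1 - 1))\<close> by alternating binomial sums, and equals
  \<open>\<Delta>\<^sup>D\<^sup>R(e\<^sub>0\<^sup>m e\<^sub>1)\<close>; multiplicativity of both coproducts and of the graded maps does the rest.
  All identities used hold over \<open>\<int>\<close>.
\<close>

abbreviation lookup :: "('a \<Rightarrow>\<^sub>0 'b::zero) \<Rightarrow> 'a \<Rightarrow> 'b" where
  "lookup \<equiv> Poly_Mapping.lookup"

abbreviation keys :: "('a \<Rightarrow>\<^sub>0 'b::zero) \<Rightarrow> 'a set" where
  "keys \<equiv> Poly_Mapping.keys"

lemma lookup_single_if: "lookup (Poly_Mapping.single a c) x = (if x = a then c else 0)"
  by (simp add: lookup_single when_def)

lemma lookup_smult [simp]: "lookup (smult c f) x = c * lookup f x"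
  by (simp add: smult_def Poly_Mapping.map.rep_eq when_def)

lemma keys_smult_subset: "keys (smult c f) \<subseteq> keys f"
  by (auto simp: in_keys_iff)

lemma smult_add: "smult c (x + y) = smult c x + smult c y"
  by (rule poly_mapping_eqI) (simp add: lookup_add ring_distribs)

lemma smult_add_left: "smult (c + d) x = smult c x + smult d x"
  by (rule poly_mapping_eqI) (simp add: lookup_add ring_distribs)

lemma smult_zero [simp]: "smult c 0 = 0"
  by (rule poly_mapping_eqI) simp

lemma smult_zero_left [simp]: "smult 0 x = 0"
  by (rule poly_mapping_eqI) simp

lemma smult_one [simp]: "smult 1 x = x"
  by (rule poly_mapping_eqI) simp

lemma smult_neg_left: "smult (- c) x = - smult c x"
  by (rule poly_mapping_eqI) simp

lemma smult_diff: "smult c (x - y) = smult c x - smult c y"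
  by (rule poly_mapping_eqI) (simp add: lookup_minus right_diff_distrib)

lemma smult_smult: "smult c (smult d x) = smult (c * d) x"
  by (rule poly_mapping_eqI) (simp add: mult.assoc)

lemma smult_sum: "smult c (\<Sum>i\<in>I. F i) = (\<Sum>i\<in>I. smult c (F i))"
  by (induction I rule: infinite_finite_induct) (auto simp: smult_add)

lemma smult_sum_left: "smult (\<Sum>i\<in>I. c i) x = (\<Sum>i\<in>I. smult (c i) x)"
  by (induction I rule: infinite_finite_induct) (auto simp: smult_add_left)

lemma smult_single: "smult c (Poly_Mapping.single u d) = Poly_Mapping.single u (c * d)"
  by (rule poly_mapping_eqI) (simp add: lookup_single_if)

lemma sum_single_lookup: "f = (\<Sum>u\<in>keys f. Poly_Mapping.single u (lookup f u))"
  by (rule poly_mapping_eqI) (simp add: lookup_sum lookup_single_if in_keys_iff)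

lemma lookup_conv:
  "lookup (conv op f g) x =
     (\<Sum>u\<in>keys f. \<Sum>v\<in>keys g. if op u v = x then lookup f u * lookup g v else 0)"
  unfolding conv_def by (simp add: lookup_sum lookup_single_if) (intro sum.cong refl, auto)

lemma lookup_conv_superset:
  assumes "finite A" "keys f \<subseteq> A" "finite B" "keys g \<subseteq> B"
  shows "lookup (conv op f g) x =
           (\<Sum>u\<in>A. \<Sum>v\<in>B. if op u v = x then lookup f u * lookup g v else 0)"
proof -
  have "lookup (conv op f g) x =
      (\<Sum>u\<in>A. \<Sum>v\<in>keys g. if op u v = x then lookup f u * lookup g v else 0)"
    unfolding lookup_conv
    by (rule sum.mono_neutral_left) (use assms in \<open>auto simp: in_keys_iff intro!: sum.neutral\<close>)
  also have "\<dots> = (\<Sum>u\<in>A. \<Sum>v\<in>B. if op u v = x then lookup f u * lookup g v else 0)"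
    by (intro sum.cong refl sum.mono_neutral_left) (use assms in \<open>auto simp: in_keys_iff\<close>)
  finally show ?thesis .
qed

lemma keys_conv_subset: "keys (conv op f g) \<subseteq> (\<lambda>(u, v). op u v) ` (keys f \<times> keys g)"
proof
  fix x assume "x \<in> keys (conv op f g)"
  then obtain u where u: "u \<in> keys f"
    "(\<Sum>v\<in>keys g. if op u v = x then lookup f u * lookup g v else 0) \<noteq> 0"
    unfolding in_keys_iff lookup_conv using sum.not_neutral_contains_not_neutral by blast
  then obtain v where "v \<in> keys g" "(if op u v = x then lookup f u * lookup g v else 0) \<noteq> 0"
    using sum.not_neutral_contains_not_neutral by blast
  with u show "x \<in> (\<lambda>(u, v). op u v) ` (keys f \<times> keys g)"
    by (force split: if_splits)
qed

lemma conv_add_left: "conv op (f1 + f2) g = conv op f1 g + conv op f2 g"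
proof (rule poly_mapping_eqI)
  fix x
  let ?A = "keys f1 \<union> keys f2"
  have A: "finite ?A" "keys (f1 + f2) \<subseteq> ?A" "keys f1 \<subseteq> ?A" "keys f2 \<subseteq> ?A"
    using keys_add[of f1 f2] by auto
  show "lookup (conv op (f1 + f2) g) x = lookup (conv op f1 g + conv op f2 g) x"
    unfolding lookup_add
    by (subst (1 2 3) lookup_conv_superset[OF A(1) _ finite_keys order_refl], (use A in auto)[3])
       (simp add: lookup_add ring_distribs sum.distrib[symmetric] if_distrib cong: if_cong)
qed

lemma conv_add_right: "conv op f (g1 + g2) = conv op f g1 + conv op f g2"
proof (rule poly_mapping_eqI)
  fix x
  let ?A = "keys g1 \<union> keys g2"
  have A: "finite ?A" "keys (g1 + g2) \<subseteq> ?A" "keys g1 \<subseteq> ?A" "keys g2 \<subseteq> ?A"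
    using keys_add[of g1 g2] by auto
  show "lookup (conv op f (g1 + g2)) x = lookup (conv op f g1 + conv op f g2) x"
    unfolding lookup_add
    by (subst (1 2 3) lookup_conv_superset[OF finite_keys order_refl A(1)], (use A in auto)[3])
       (simp add: lookup_add ring_distribs sum.distrib[symmetric] if_distrib cong: if_cong)
qed

lemma conv_smult_left: "conv op (smult c f) g = smult c (conv op f g)"
proof (rule poly_mapping_eqI)
  fix x
  have "lookup (conv op (smult c f) g) x =
      (\<Sum>u\<in>keys f. \<Sum>v\<in>keys g. if op u v = x then lookup (smult c f) u * lookup g v else 0)"
    by (rule lookup_conv_superset) (auto simp: keys_smult_subset)
  then show "lookup (conv op (smult c f) g) x = lookup (smult c (conv op f g)) x"
    by (simp add: lookup_conv sum_distrib_left mult.assoc if_distrib cong: if_cong)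
qed

lemma conv_smult_right: "conv op f (smult c g) = smult c (conv op f g)"
proof (rule poly_mapping_eqI)
  fix x
  have "lookup (conv op f (smult c g)) x =
      (\<Sum>u\<in>keys f. \<Sum>v\<in>keys g. if op u v = x then lookup f u * lookup (smult c g) v else 0)"
    by (rule lookup_conv_superset) (auto simp: keys_smult_subset)
  then show "lookup (conv op f (smult c g)) x = lookup (smult c (conv op f g)) x"
    by (simp add: lookup_conv sum_distrib_left mult.left_commute if_distrib cong: if_cong)
qed

lemma conv_zero_left [simp]: "conv op 0 g = 0"
  and conv_zero_right [simp]: "conv op f 0 = 0"
  by (simp_all add: conv_def)

lemma conv_diff_left: "conv op (f - g) h = conv op f h - conv op g h"
  using conv_add_left[of op "f - g" g h] by (simp add: eq_diff_eq)

lemma conv_diff_right: "conv op h (f - g) = conv op h f - conv op h g"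
  using conv_add_right[of op h "f - g" g] by (simp add: eq_diff_eq)

lemma conv_sum_left: "conv op (\<Sum>i\<in>I. F i) g = (\<Sum>i\<in>I. conv op (F i) g)"
  by (induction I rule: infinite_finite_induct) (auto simp: conv_add_left)

lemma conv_sum_right: "conv op g (\<Sum>i\<in>I. F i) = (\<Sum>i\<in>I. conv op g (F i))"
  by (induction I rule: infinite_finite_induct) (auto simp: conv_add_right)

lemma conv_single:
  "conv op (Poly_Mapping.single u a) (Poly_Mapping.single v b) = Poly_Mapping.single (op u v) (a * b)"
  by (rule poly_mapping_eqI) (subst lookup_conv_superset[of "{u}" _ "{v}"], auto simp: lookup_single_if)

lemma conv_assoc:
  assumes "\<And>u v w. op (op u v) w = op u (op v w)"
  shows "conv op (conv op f g) h = conv op f (conv op g h)"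
proof -
  have expand: "conv op (conv op f g) h =
      (\<Sum>u\<in>keys f. \<Sum>v\<in>keys g. \<Sum>w\<in>keys h.
         Poly_Mapping.single (op (op u v) w) (lookup f u * lookup g v * lookup h w))"
    and expand': "conv op f (conv op g h) =
      (\<Sum>u\<in>keys f. \<Sum>v\<in>keys g. \<Sum>w\<in>keys h.
         Poly_Mapping.single (op u (op v w)) (lookup f u * (lookup g v * lookup h w)))"
    by (subst (1 2 3) sum_single_lookup,
        simp add: conv_sum_left conv_sum_right conv_single,
        subst sum.swap[of _ "keys h" "keys g"], subst sum.swap[of _ "keys h" "keys f"],
        subst sum.swap[of _ "keys g" "keys f"], simp)+
  show ?thesis
    unfolding expand expand' by (simp add: assms mult.assoc)
qed

definition inverse_letters :: "letter \<Rightarrow> letter \<Rightarrow> bool" where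
  "inverse_letters a b \<longleftrightarrow> fst a = fst b \<and> snd a \<noteq> snd b"

fun cancel_free :: "letter list \<Rightarrow> bool" where
  "cancel_free [] = True"
| "cancel_free [a] = True"
| "cancel_free (a # b # w) = (\<not> inverse_letters a b \<and> cancel_free (b # w))"

lemma red_cons_Cons_if:
  "red_cons a (b # zs) = (if inverse_letters a b then zs else a # b # zs)"
  by (simp add: inverse_letters_def)

declare red_cons.simps(2) [simp del]

lemma red_Nil [simp]: "red [] = []"
  by (simp add: red_def)

lemma red_Cons: "red (a # xs) = red_cons a (red xs)"
  by (simp add: red_def)

lemma red_append: "red (u @ v) = foldr red_cons u (red v)"
  by (simp add: red_def)

lemma cancel_free_tl: "cancel_free (a # w) \<Longrightarrow> cancel_free w"
  by (cases w) auto

lemma cancel_free_red_cons: "cancel_free w \<Longrightarrow> cancel_free (red_cons a w)"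
  by (cases w) (auto simp: red_cons_Cons_if dest: cancel_free_tl)

lemma cancel_free_foldr_red_cons: "cancel_free z \<Longrightarrow> cancel_free (foldr red_cons u z)"
  by (induction u) (auto intro: cancel_free_red_cons)

lemma cancel_free_red: "cancel_free (red u)"
  unfolding red_def by (rule cancel_free_foldr_red_cons) simp

lemma red_cons_cancel_free: "cancel_free (a # w) \<Longrightarrow> red_cons a w = a # w"
  by (cases w) (auto simp: red_cons_Cons_if)

lemma red_cancel_free: "cancel_free w \<Longrightarrow> red w = w"
  by (induction w) (simp_all add: red_Cons cancel_free_tl red_cons_cancel_free)

lemma reduced_iff_cancel_free: "reduced w \<longleftrightarrow> cancel_free w"
  unfolding reduced_def using cancel_free_red red_cancel_free by metis

lemma reduced_red: "reduced (red u)"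
  by (simp add: reduced_iff_cancel_free cancel_free_red)

lemma red_red_cons_inverse:
  assumes "cancel_free z" "inverse_letters a b"
  shows "red_cons a (red_cons b z) = z"
proof (cases z)
  case (Cons c z')
  show ?thesis
  proof (cases "inverse_letters b c")
    case True
    have "a = c" using assms(2) True
      by (cases a; cases b; cases c) (auto simp: inverse_letters_def)
    moreover have "\<not> inverse_letters a c" using assms(2) True
      by (cases a; cases b; cases c) (auto simp: inverse_letters_def)
    ultimately show ?thesis using Cons True assms(1)
      by (simp add: red_cons_Cons_if red_cons_cancel_free)
  next
    case False
    then show ?thesis using Cons assms(2) by (simp add: red_cons_Cons_if)
  qed
qed (use assms in \<open>simp add: red_cons_Cons_if\<close>)

lemma foldr_red_cons_red_cons:
  assumes "cancel_free r" "cancel_free z"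
  shows "foldr red_cons (red_cons a r) z = red_cons a (foldr red_cons r z)"
proof (cases r)
  case (Cons b r')
  have "cancel_free (foldr red_cons r' z)"
    using assms Cons by (intro cancel_free_foldr_red_cons) auto
  then show ?thesis
    using Cons by (simp add: red_cons_Cons_if red_red_cons_inverse)
qed simp

lemma foldr_red_cons_red: "cancel_free z \<Longrightarrow> foldr red_cons (red u) z = foldr red_cons u z"
  by (induction u) (simp_all add: red_Cons foldr_red_cons_red_cons cancel_free_red)

lemma red_red_append_left: "red (red u @ v) = red (u @ v)"
  by (simp add: red_append foldr_red_cons_red cancel_free_red)

lemma red_red_append_right: "red (u @ red v) = red (u @ v)"
  by (simp add: red_append red_cancel_free cancel_free_red)

lemma red_assoc: "red (red (u @ v) @ w) = red (u @ red (v @ w))"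
  by (simp add: red_red_append_left red_red_append_right)

lemma cancel_free_replicate: "cancel_free (replicate n a)"
proof (induction n)
  case (Suc n)
  then show ?case by (cases n) (auto simp: inverse_letters_def)
qed simp

section \<open>Noncommutative power series and Magnus coefficients\<close>

text \<open>Functions \<open>bool list \<Rightarrow> 'k\<close> are noncommutative power series in \<open>e\<^sub>0\<close> (\<open>False\<close>)
  and \<open>e\<^sub>1\<close> (\<open>True\<close>), multiplied by \<open>series_mult\<close>.\<close>

definition series_mult :: "(bool list \<Rightarrow> 'k::comm_ring_1) \<Rightarrow> (bool list \<Rightarrow> 'k) \<Rightarrow> bool list \<Rightarrow> 'k" where
  "series_mult F G w = (\<Sum>i\<le>length w. F (take i w) * G (drop i w))"

definition word_series :: "bool list \<Rightarrow> bool list \<Rightarrow> 'k::comm_ring_1" where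
  "word_series u v = (if v = u then 1 else 0)"

lemma series_mult_Nil [simp]: "series_mult F G [] = F [] * G []"
  by (simp add: series_mult_def)

lemma series_mult_assoc: "series_mult (series_mult F G) H = series_mult F (series_mult G H)"
proof
  fix w :: "bool list"
  let ?n = "length w"
  have "series_mult (series_mult F G) H w =
      (\<Sum>k\<le>?n. \<Sum>j\<le>k. F (take j w) * G (take (k - j) (drop j w)) * H (drop k w))"
    unfolding series_mult_def
    by (auto simp: sum_distrib_right min_def take_take drop_take intro!: sum.cong)
  also have "\<dots> = (\<Sum>(j, l)\<in>{(j, l). j + l \<le> ?n}. F (take j w) * G (take l (drop j w)) * H (drop (j + l) w))"
    by (subst sum.triangle_reindex_eq) (auto intro!: sum.cong)
  also have "{(j, l). j + l \<le> ?n} = Sigma {..?n} (\<lambda>j. {..?n - j})"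
    by auto
  also have "(\<Sum>(j, l)\<in>Sigma {..?n} (\<lambda>j. {..?n - j}). F (take j w) * G (take l (drop j w)) * H (drop (j + l) w))
      = series_mult F (series_mult G H) w"
    unfolding series_mult_def
    by (subst sum.Sigma[symmetric]) (auto simp: sum_distrib_left mult.assoc add.commute intro!: sum.cong)
  finally show "series_mult (series_mult F G) H w = series_mult F (series_mult G H) w" .
qed

lemma series_mult_Cons_short_left:
  assumes "\<And>v. 2 \<le> length v \<Longrightarrow> F v = 0"
  shows "series_mult F G (c # w) = F [] * G (c # w) + F [c] * G w"
proof -
  have "series_mult F G (c # w) = (\<Sum>i\<le>length (c # w).
      (if i = 0 then F [] * G (c # w) else 0) + (if i = 1 then F [c] * G w else 0))"
    unfolding series_mult_def
  proof (intro sum.cong refl)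
    fix i assume i: "i \<in> {..length (c # w)}"
    consider "i = 0" | "i = 1" | "2 \<le> i"
      by linarith
    then show "F (take i (c # w)) * G (drop i (c # w)) =
        (if i = 0 then F [] * G (c # w) else 0) + (if i = 1 then F [c] * G w else 0)"
      by cases (use i in \<open>auto simp: assms\<close>)
  qed
  then show ?thesis
    by (simp add: sum.distrib Suc_le_eq)
qed

lemma series_mult_snoc_short_right:
  assumes "\<And>v. 2 \<le> length v \<Longrightarrow> G v = 0"
  shows "series_mult F G (w @ [c]) = F (w @ [c]) * G [] + F w * G [c]"
proof -
  have "series_mult F G (w @ [c]) = (\<Sum>i\<le>Suc (length w).
      (if i = Suc (length w) then F (w @ [c]) * G [] else 0) + (if i = length w then F w * G [c] else 0))"
    unfolding series_mult_def
    by (intro sum.cong refl) (auto simp: assms)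
  then show ?thesis
    by (simp add: sum.distrib)
qed

lemma word_series_short: "length u \<le> 1 \<Longrightarrow> 2 \<le> length v \<Longrightarrow> word_series u v = 0"
  by (auto simp: word_series_def)

lemma series_mult_one_left [simp]: "series_mult (word_series []) F = F"
proof
  fix w show "series_mult (word_series []) F w = F w"
    by (cases w) (simp_all add: series_mult_Cons_short_left word_series_short, simp_all add: word_series_def)
qed

lemma series_mult_one_right [simp]: "series_mult F (word_series []) = F"
proof
  fix w show "series_mult F (word_series []) w = F w"
    by (cases w rule: rev_cases)
       (simp_all add: series_mult_snoc_short_right word_series_short, simp_all add: word_series_def)
qed

lemma series_mult_letter_right:
  "series_mult F (word_series [i]) w = (if w \<noteq> [] \<and> last w = i then F (butlast w) else 0)"
  by (cases w rule: rev_cases)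
     (simp_all add: series_mult_snoc_short_right word_series_short, simp_all add: word_series_def)

lemma series_mult_word_series: "series_mult (word_series u) (word_series v) = word_series (u @ v)"
proof
  fix w
  have "series_mult (word_series u) (word_series v) w = (\<Sum>i\<le>length w. if i = length u \<and> w = u @ v then 1 else 0)"
    unfolding series_mult_def word_series_def
    by (intro sum.cong refl) (auto simp: append_eq_conv_conj)
  also have "\<dots> = word_series (u @ v) w"
    by (cases "w = u @ v") (simp_all add: word_series_def)
  finally show "series_mult (word_series u) (word_series v) w = word_series (u @ v) w" .
qed

lemma series_mult_sum_left: "series_mult (\<lambda>w. \<Sum>u\<in>A. F u w) G = (\<lambda>w. \<Sum>u\<in>A. series_mult (F u) G w)"
  unfolding series_mult_def by (auto simp: sum_distrib_right intro: sum.swap)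

lemma series_mult_sum_right: "series_mult G (\<lambda>w. \<Sum>u\<in>A. F u w) = (\<lambda>w. \<Sum>u\<in>A. series_mult G (F u) w)"
  unfolding series_mult_def by (auto simp: sum_distrib_left intro: sum.swap)

lemma series_mult_scale_left: "series_mult (\<lambda>w. c * F w) G = (\<lambda>w. c * series_mult F G w)"
  unfolding series_mult_def by (auto simp: sum_distrib_left mult.assoc)

lemma series_mult_scale_right: "series_mult G (\<lambda>w. c * F w) = (\<lambda>w. c * series_mult G F w)"
  unfolding series_mult_def by (auto simp: sum_distrib_left mult.left_commute)

definition letter_series :: "letter \<Rightarrow> bool list \<Rightarrow> 'k::comm_ring_1" where
  "letter_series a w =
     (if snd a then (if w = replicate (length w) (fst a) then (-1) ^ length w else 0)
      else (if w = [] \<or> w = [fst a] then 1 else 0))"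

lemma magc_Nil_series: "magc [] = word_series []"
  by (auto simp: word_series_def)

lemma magc_Cons_series: "magc (a # g) = series_mult (letter_series a) (magc g)"
proof
  fix w
  obtain i s where a: "a = (i, s)" by (cases a)
  show "magc (a # g) w = series_mult (letter_series a) (magc g) w"
  proof (cases s)
    case True
    then show ?thesis
      unfolding a series_mult_def letter_series_def
      by (auto simp: atLeast0AtMost min_def intro!: sum.cong)
  next
    case False
    have short: "\<And>v. 2 \<le> length v \<Longrightarrow> letter_series (i, False) v = 0"
      by (auto simp: letter_series_def)
    show ?thesis
      using False unfolding a
      by (cases w) (simp_all add: series_mult_Cons_short_left[OF short], simp_all add: letter_series_def)
  qed
qed

lemma magc_append: "magc (u @ v) = series_mult (magc u) (magc v)"
  by (induction u) (simp_all add: magc_Nil_series magc_Cons_series series_mult_assoc)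

lemma magc_at_Nil: "magc u [] = 1"
  by (induction u) (simp_all add: magc_Cons_series letter_series_def)

lemma letter_series_inverse_Cons:
  "letter_series (i, True) (c # v) = (if c = i then - letter_series (i, True) v else 0)"
  by (auto simp: letter_series_def)

lemma letter_series_inverse_snoc:
  "letter_series (i, True) (v @ [c]) = (if c = i then - letter_series (i, True) v else 0)"
proof -
  have "replicate (Suc (length v)) i = replicate (length v) i @ [i]"
    by (simp add: replicate_append_same)
  then show ?thesis
    by (simp add: letter_series_def)
qed

lemma series_mult_letter_series_inverse:
  assumes "inverse_letters a b"
  shows "series_mult (letter_series a) (letter_series b) = word_series []"
proof
  fix w
  obtain i s where a: "a = (i, s)" and b: "b = (i, \<not> s)"
    using assms by (cases a; cases b) (auto simp: inverse_letters_def)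
  have short: "\<And>v. 2 \<le> length v \<Longrightarrow> letter_series (i, False) v = 0"
    by (auto simp: letter_series_def)
  show "series_mult (letter_series a) (letter_series b) w = word_series [] w"
  proof (cases s)
    case True
    then show ?thesis
      unfolding a b
      by (cases w rule: rev_cases)
         (simp_all add: series_mult_snoc_short_right[OF short] letter_series_inverse_snoc,
          simp_all add: letter_series_def word_series_def)
  next
    case False
    then show ?thesis
      unfolding a b
      by (cases w)
         (simp_all add: series_mult_Cons_short_left[OF short] letter_series_inverse_Cons,
          simp_all add: letter_series_def word_series_def)
  qed
qed

lemma magc_red_cons: "magc (red_cons a g) = magc (a # g)"
proof (cases g)
  case (Cons b g')
  show ?thesis
  proof (cases "inverse_letters a b")
    case True
    then have "magc (a # g) = magc g'"
      by (simp add: Cons magc_Cons_series flip: series_mult_assoc,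
          simp add: series_mult_letter_series_inverse)
    moreover have "red_cons a g = g'"
      using Cons True by (simp add: red_cons_Cons_if)
    ultimately show ?thesis
      by metis
  qed (simp add: Cons red_cons_Cons_if)
qed simp

lemma magc_red: "magc (red u) = magc u"
  by (induction u) (simp_all add: red_Cons magc_red_cons magc_Cons_series)

lemma magc_red_append: "magc (red (u @ v)) = series_mult (magc u) (magc v)"
  by (simp add: magc_red magc_append)


definition magnus :: "(letter list \<Rightarrow>\<^sub>0 'k::comm_ring_1) \<Rightarrow> bool list \<Rightarrow> 'k" where
  "magnus f w = (\<Sum>u\<in>keys f. lookup f u * magc u w)"

lemma magnus_superset:
  "finite A \<Longrightarrow> keys f \<subseteq> A \<Longrightarrow> magnus f w = (\<Sum>u\<in>A. lookup f u * magc u w)"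
  unfolding magnus_def by (rule sum.mono_neutral_left) (auto simp: in_keys_iff)

lemma magnus_add: "magnus (f + g) w = magnus f w + magnus g w"
proof -
  let ?A = "keys f \<union> keys g"
  have A: "finite ?A" "keys (f + g) \<subseteq> ?A" "keys f \<subseteq> ?A" "keys g \<subseteq> ?A"
    using keys_add[of f g] by auto
  show ?thesis
    by (simp add: magnus_superset[OF A(1,2)] magnus_superset[OF A(1,3)] magnus_superset[OF A(1,4)]
        lookup_add ring_distribs sum.distrib)
qed

lemma magnus_zero [simp]: "magnus 0 w = 0"
  by (simp add: magnus_def)

lemma magnus_diff: "magnus (f - g) w = magnus f w - magnus g w"
  using magnus_add[of "f - g" g w] by (simp add: eq_diff_eq)

lemma magnus_sum: "magnus (\<Sum>i\<in>I. F i) w = (\<Sum>i\<in>I. magnus (F i) w)"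
  by (induction I rule: infinite_finite_induct) (auto simp: magnus_add)

lemma magnus_smult: "magnus (smult c f) w = c * magnus f w"
proof -
  have "magnus (smult c f) w = (\<Sum>u\<in>keys f. lookup (smult c f) u * magc u w)"
    by (rule magnus_superset[OF finite_keys keys_smult_subset])
  then show ?thesis
    by (simp add: magnus_def sum_distrib_left mult.assoc)
qed

lemma magnus_single: "magnus (Poly_Mapping.single u c) w = c * magc u w"
  by (simp add: magnus_def lookup_single_if)

lemma magnus_mulB: "magnus (mulB f g) = series_mult (magnus f) (magnus g)"
proof
  fix w
  have "magnus (mulB f g) w =
      (\<Sum>u\<in>keys f. \<Sum>v\<in>keys g. lookup f u * lookup g v * magc (red (u @ v)) w)"
    unfolding mulB_def conv_def by (simp add: magnus_sum magnus_single)
  also have "\<dots> = series_mult (magnus f) (magnus g) w"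
    unfolding magnus_def[abs_def] magc_red_append series_mult_sum_left series_mult_scale_left
      series_mult_sum_right series_mult_scale_right
    by (simp add: sum_distrib_left mult.assoc)
  finally show "magnus (mulB f g) w = series_mult (magnus f) (magnus g) w" .
qed

lemma augm_eq_magnus_Nil: "augm f = magnus f []"
  by (simp add: augm_def magnus_def magc_at_Nil)

text \<open>The Magnus expansion of \<open>k[F\<^sub>2 \<times> F\<^sub>2] \<supseteq> W\<^sup>B \<otimes> W\<^sup>B\<close>, with values in series in two
  commuting sets of noncommuting variables.\<close>

definition magnus2 :: "(letter list \<times> letter list \<Rightarrow>\<^sub>0 'k::comm_ring_1) \<Rightarrow> bool list \<times> bool list \<Rightarrow> 'k" where
  "magnus2 F pq = (\<Sum>x\<in>keys F. lookup F x * magc (fst x) (fst pq) * magc (snd x) (snd pq))"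

definition series_mult2 ::
  "(bool list \<times> bool list \<Rightarrow> 'k::comm_ring_1) \<Rightarrow> (bool list \<times> bool list \<Rightarrow> 'k) \<Rightarrow> bool list \<times> bool list \<Rightarrow> 'k"
where
  "series_mult2 F G pq = (\<Sum>i\<le>length (fst pq). \<Sum>j\<le>length (snd pq).
      F (take i (fst pq), take j (snd pq)) * G (drop i (fst pq), drop j (snd pq)))"

lemma magnus2_superset:
  "finite A \<Longrightarrow> keys F \<subseteq> A \<Longrightarrow>
    magnus2 F pq = (\<Sum>x\<in>A. lookup F x * magc (fst x) (fst pq) * magc (snd x) (snd pq))"
  unfolding magnus2_def by (rule sum.mono_neutral_left) (auto simp: in_keys_iff)

lemma magnus2_add: "magnus2 (F + G) pq = magnus2 F pq + magnus2 G pq"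
proof -
  let ?A = "keys F \<union> keys G"
  have A: "finite ?A" "keys (F + G) \<subseteq> ?A" "keys F \<subseteq> ?A" "keys G \<subseteq> ?A"
    using keys_add[of F G] by auto
  show ?thesis
    by (simp add: magnus2_superset[OF A(1,2)] magnus2_superset[OF A(1,3)] magnus2_superset[OF A(1,4)]
        lookup_add ring_distribs sum.distrib)
qed

lemma magnus2_zero [simp]: "magnus2 0 pq = 0"
  by (simp add: magnus2_def)

lemma magnus2_diff: "magnus2 (F - G) pq = magnus2 F pq - magnus2 G pq"
  using magnus2_add[of "F - G" G pq] by (simp add: eq_diff_eq)

lemma magnus2_uminus: "magnus2 (- F) pq = - magnus2 F pq"
  using magnus2_diff[of 0 F pq] by simp

lemma magnus2_sum: "magnus2 (\<Sum>i\<in>I. F i) pq = (\<Sum>i\<in>I. magnus2 (F i) pq)"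
  by (induction I rule: infinite_finite_induct) (auto simp: magnus2_add)

lemma magnus2_smult: "magnus2 (smult c F) pq = c * magnus2 F pq"
proof -
  have "magnus2 (smult c F) pq =
      (\<Sum>x\<in>keys F. lookup (smult c F) x * magc (fst x) (fst pq) * magc (snd x) (snd pq))"
    by (rule magnus2_superset[OF finite_keys keys_smult_subset])
  then show ?thesis
    by (simp add: magnus2_def sum_distrib_left mult.assoc)
qed

lemma magnus2_single:
  "magnus2 (Poly_Mapping.single x c) pq = c * magc (fst x) (fst pq) * magc (snd x) (snd pq)"
  by (simp add: magnus2_def lookup_single_if)

lemma magnus2_tens: "magnus2 (tens a b) (p, q) = magnus a p * magnus b q"
  unfolding tens_def by (simp add: magnus2_sum magnus2_single magnus_def sum_product mult_ac)

lemma magnus2_mulBB: "magnus2 (mulBB F G) pq = series_mult2 (magnus2 F) (magnus2 G) pq"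
proof -
  obtain p q where pq: "pq = (p, q)" by (cases pq)
  have "magnus2 (mulBB F G) (p, q) = (\<Sum>x\<in>keys F. \<Sum>y\<in>keys G. lookup F x * lookup G y *
      (series_mult (magc (fst x)) (magc (fst y)) p * series_mult (magc (snd x)) (magc (snd y)) q))"
    unfolding mulBB_def conv_def
    by (simp add: magnus2_sum magnus2_single magc_red_append case_prod_beta mult_ac)
  also have "\<dots> = series_mult2 (magnus2 F) (magnus2 G) (p, q)"
    unfolding series_mult2_def magnus2_def series_mult_def
    apply (simp add: sum_distrib_left sum_distrib_right sum_product)
    apply (subst sum.swap[of _ "keys G" "keys F"])
    apply (subst sum.swap[of _ "{..length q}" "keys F"])
    apply (subst sum.swap[of _ "{..length p}" "keys F"])
    apply (subst sum.swap[of _ "{..length q}" "keys G"])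
    apply (subst sum.swap[of _ "{..length p}" "keys G"])
    apply (subst sum.swap[of _ "{..length q}" "{..length p}"])
    by (simp add: mult_ac)
  finally show ?thesis by (simp add: pq)
qed

lemma VB_zero [simp]: "0 \<in> VB"
  by (simp add: VB_def)

lemma VB_add: "f \<in> VB \<Longrightarrow> g \<in> VB \<Longrightarrow> f + g \<in> VB"
  using keys_add[of f g] by (auto simp: VB_def)

lemma VB_smult: "f \<in> VB \<Longrightarrow> smult c f \<in> VB"
  using keys_smult_subset[of c f] by (auto simp: VB_def)

lemma VB_diff: "f \<in> VB \<Longrightarrow> g \<in> VB \<Longrightarrow> f - g \<in> VB"
  using VB_add[of f "smult (- 1) g"] VB_smult[of g "- 1"] by (simp add: smult_neg_left)

lemma VB_single: "reduced u \<Longrightarrow> Poly_Mapping.single u c \<in> VB"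
  by (simp add: VB_def)

lemma VB_single_letter: "Poly_Mapping.single [a] c \<in> VB"
  by (simp add: VB_single reduced_iff_cancel_free)

lemma mulB_in_VB: "mulB f g \<in> VB"
  unfolding VB_def mulB_def using keys_conv_subset[of "\<lambda>u v. red (u @ v)" f g] reduced_red by fastforce

lemma oneB_in_VB: "oneB \<in> VB"
  by (simp add: oneB_def VB_single reduced_iff_cancel_free)

lemma X1_minus_oneB_in_VB: "X1 - oneB \<in> VB"
  by (simp add: X1_def VB_diff VB_single_letter oneB_in_VB)

lemma mulB_add_left: "mulB (f + g) h = mulB f h + mulB g h"
  and mulB_add_right: "mulB h (f + g) = mulB h f + mulB h g"
  and mulB_diff_left: "mulB (f - g) h = mulB f h - mulB g h"
  and mulB_diff_right: "mulB h (f - g) = mulB h f - mulB h g"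
  and mulB_smult_left: "mulB (smult c f) h = smult c (mulB f h)"
  and mulB_smult_right: "mulB h (smult c f) = smult c (mulB h f)"
  and mulB_sum_right: "mulB h (\<Sum>i\<in>I. F i) = (\<Sum>i\<in>I. mulB h (F i))"
  by (simp_all add: mulB_def conv_add_left conv_add_right conv_diff_left conv_diff_right
      conv_smult_left conv_smult_right conv_sum_right)

lemma mulB_zero_left [simp]: "mulB 0 h = 0"
  by (simp add: mulB_def)

lemma mulB_assoc: "mulB (mulB f g) h = mulB f (mulB g h)"
  unfolding mulB_def by (rule conv_assoc) (rule red_assoc)

lemma mulB_single:
  "mulB (Poly_Mapping.single u a) (Poly_Mapping.single v b) = Poly_Mapping.single (red (u @ v)) (a * b)"
  by (simp add: mulB_def conv_single)

lemma mulB_one_left: "f \<in> VB \<Longrightarrow> mulB oneB f = f"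
proof (rule poly_mapping_eqI)
  fix x assume f: "f \<in> VB"
  have "lookup (mulB oneB f) x =
      (\<Sum>u\<in>{[]}. \<Sum>v\<in>keys f. if red (u @ v) = x then lookup oneB u * lookup f v else 0)"
    unfolding mulB_def by (rule lookup_conv_superset) (auto simp: oneB_def)
  also have "\<dots> = (\<Sum>v\<in>keys f. if v = x then lookup f v else 0)"
    using f by (auto simp: oneB_def VB_def reduced_def intro!: sum.cong)
  finally show "lookup (mulB oneB f) x = lookup f x"
    by (simp add: in_keys_iff)
qed

lemma mulB_one_right: "f \<in> VB \<Longrightarrow> mulB f oneB = f"
proof (rule poly_mapping_eqI)
  fix x assume f: "f \<in> VB"
  have "lookup (mulB f oneB) x =
      (\<Sum>u\<in>keys f. \<Sum>v\<in>{[]}. if red (u @ v) = x then lookup f u * lookup oneB v else 0)"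
    unfolding mulB_def by (rule lookup_conv_superset) (auto simp: oneB_def)
  also have "\<dots> = (\<Sum>v\<in>keys f. if v = x then lookup f v else 0)"
    using f by (auto simp: oneB_def VB_def reduced_def intro!: sum.cong)
  finally show "lookup (mulB f oneB) x = lookup f x"
    by (simp add: in_keys_iff)
qed

lemma magnus_oneB: "magnus oneB = word_series []"
  by (simp add: fun_eq_iff oneB_def magnus_single magc_Nil_series)

lemma magnus_single_letter: "magnus (Poly_Mapping.single [a] 1) = letter_series a"
  by (simp add: fun_eq_iff magnus_single magc_Cons_series magc_Nil_series)

lemma augI_iff: "a \<in> augI \<longleftrightarrow> a \<in> VB \<and> magnus a [] = 0"
  by (simp add: augI_def augm_eq_magnus_Nil)

lemma filV_Suc: "filV (Suc n) = addspan {mulB a b | a b. a \<in> augI \<and> b \<in> filV n}"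
  by (simp add: prodspan_def)

declare filV.simps(2) [simp del]

lemma addspan_mono:
  assumes "S \<subseteq> T"
  shows "addspan S \<subseteq> addspan T"
proof
  fix x assume "x \<in> addspan S"
  then show "x \<in> addspan T"
    by (induction x rule: addspan.induct) (use assms in \<open>auto intro: addspan.intros\<close>)
qed

lemma filV_subset_VB: "x \<in> filV n \<Longrightarrow> x \<in> VB"
proof (induction n arbitrary: x)
  case (Suc n)
  from Suc.prems show ?case
    unfolding filV_Suc by (induction x rule: addspan.induct) (auto intro: VB_add mulB_in_VB)
qed simp

lemma filV_Suc_subset: "filV (Suc n) \<subseteq> filV n"
proof (induction n)
  case 0
  show ?case
  proof
    fix x assume "x \<in> filV (Suc 0)"
    then show "x \<in> filV 0"
      using filV_subset_VB by simp
  qed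
next
  case (Suc n)
  then show ?case
    unfolding filV_Suc[of "Suc n"] filV_Suc[of n] by (intro addspan_mono) blast
qed

lemma filV_zero: "0 \<in> filV n"
  by (cases n) (auto simp: filV_Suc intro: addspan.zero)

lemma filV_add: "x \<in> filV n \<Longrightarrow> y \<in> filV n \<Longrightarrow> x + y \<in> filV n"
  by (cases n) (auto simp: filV_Suc intro: addspan.add VB_add)

lemma filV_mulB: "a \<in> augI \<Longrightarrow> b \<in> filV n \<Longrightarrow> mulB a b \<in> filV (Suc n)"
  unfolding filV_Suc by (rule addspan.gen) blast

lemma filV_smult: "x \<in> filV n \<Longrightarrow> smult c x \<in> filV n"
proof (cases n)
  case (Suc m)
  assume "x \<in> filV n"
  then have "x \<in> addspan {mulB a b |a b. a \<in> augI \<and> b \<in> filV m}"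
    using Suc by (simp add: filV_Suc)
  then have "smult c x \<in> addspan {mulB a b |a b. a \<in> augI \<and> b \<in> filV m}"
  proof (induction x rule: addspan.induct)
    case (gen x)
    then obtain a b where ab: "x = mulB a b" "a \<in> augI" "b \<in> filV m"
      by blast
    then have "smult c a \<in> augI" "smult c x = mulB (smult c a) b"
      by (simp_all add: augI_iff VB_smult magnus_smult mulB_smult_left)
    then show ?case
      using ab(3) by (intro addspan.gen) blast
  qed (simp_all add: smult_add addspan.intros)
  then show ?thesis
    using Suc by (simp add: filV_Suc)
qed (simp add: VB_smult)

lemma filV_sum: "(\<And>i. i \<in> I \<Longrightarrow> F i \<in> filV n) \<Longrightarrow> (\<Sum>i\<in>I. F i) \<in> filV n"
  by (induction I rule: infinite_finite_induct) (auto intro: filV_add filV_zero)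

lemma filV_mulB_left:
  assumes x: "x \<in> VB" and r: "r \<in> filV m"
  shows "mulB x r \<in> filV m"
proof -
  define c where "c = magnus x []"
  have "x - smult c oneB \<in> augI"
    using x by (simp add: augI_iff VB_diff VB_smult oneB_in_VB magnus_diff magnus_smult magnus_oneB
        word_series_def c_def)
  then have "mulB (x - smult c oneB) r \<in> filV m"
    using filV_Suc_subset filV_mulB r by blast
  moreover have "mulB x r = smult c r + mulB (x - smult c oneB) r"
    by (simp add: mulB_diff_left mulB_smult_left mulB_one_left[OF filV_subset_VB[OF r]])
  ultimately show ?thesis
    by (simp add: filV_add filV_smult r)
qed

lemma magnus_vanish_filV: "x \<in> filV n \<Longrightarrow> length w < n \<Longrightarrow> magnus x w = 0"
proof (induction n arbitrary: x w)
  case (Suc n)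
  from Suc.prems(1) have "x \<in> addspan {mulB a b |a b. a \<in> augI \<and> b \<in> filV n}"
    by (simp add: filV_Suc)
  then show ?case
    using Suc.prems(2)
  proof (induction x rule: addspan.induct)
    case (gen x)
    then obtain a b where ab: "x = mulB a b" "a \<in> augI" "b \<in> filV n"
      by blast
    have "magnus a (take i w) * magnus b (drop i w) = 0" if "i \<le> length w" for i
    proof (cases i)
      case 0
      then show ?thesis using ab(2) by (simp add: augI_iff)
    next
      case (Suc j)
      then have "length (drop i w) < n" using gen.prems that by auto
      then show ?thesis using Suc.IH[OF ab(3)] by simp
    qed
    then show ?case
      by (simp add: ab magnus_mulB series_mult_def)
  qed (simp_all add: magnus_add)
qed simp

section \<open>The filtration is the Magnus valuation\<close>

definition aug_letter :: "bool \<Rightarrow> letter list \<Rightarrow>\<^sub>0 'k::comm_ring_1" where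
  "aug_letter i = Poly_Mapping.single [(i, False)] 1 - oneB"

fun aug_monomial :: "bool list \<Rightarrow> letter list \<Rightarrow>\<^sub>0 'k::comm_ring_1" where
  "aug_monomial [] = oneB"
| "aug_monomial (i # w) = mulB (aug_letter i) (aug_monomial w)"

definition X_inv :: "bool \<Rightarrow> letter list \<Rightarrow>\<^sub>0 'k::comm_ring_1" where
  "X_inv i = Poly_Mapping.single [(i, True)] 1"

lemma single_letter_eq_aug_letter: "Poly_Mapping.single [(i, False)] 1 = aug_letter i + oneB"
  by (simp add: aug_letter_def)

lemma aug_letter_in_VB: "aug_letter i \<in> VB"
  by (simp add: aug_letter_def VB_diff VB_single_letter oneB_in_VB)

lemma magnus_aug_letter: "magnus (aug_letter i) = word_series [i]"
  by (auto simp: fun_eq_iff aug_letter_def magnus_diff magnus_single_letter magnus_oneB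
      letter_series_def word_series_def)

lemma aug_letter_in_augI: "aug_letter i \<in> augI"
  by (simp add: augI_iff aug_letter_in_VB magnus_aug_letter word_series_def)

lemma aug_monomial_in_VB: "aug_monomial w \<in> VB"
  by (cases w) (simp_all add: oneB_in_VB mulB_in_VB)

lemma aug_monomial_filV: "aug_monomial w \<in> filV (length w)"
  by (induction w) (simp_all add: oneB_in_VB filV_mulB aug_letter_in_augI)

lemma aug_monomial_replicate_append:
  "aug_monomial (replicate k i @ w) = (mulB (aug_letter i) ^^ k) (aug_monomial w)"
  by (induction k) auto

lemma X_inv_mulB_aug_letter: "mulB (X_inv i) (aug_letter i) = oneB - X_inv i"
proof -
  have "red [(i, True), (i, False)] = []"
    by (simp add: red_Cons red_cons_Cons_if inverse_letters_def)
  then show ?thesis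
    by (simp add: X_inv_def aug_letter_def mulB_diff_right mulB_single mulB_one_right
        VB_single_letter oneB_def red_Cons)
qed

lemma X_inv_minus_oneB_in_augI: "X_inv i - oneB \<in> augI"
  by (simp add: augI_iff VB_diff VB_single_letter oneB_in_VB magnus_diff magnus_oneB X_inv_def
      magnus_single_letter letter_series_def word_series_def)

lemma X_inv_expansion:
  "P \<in> filV m \<Longrightarrow>
    mulB (X_inv i) P - (\<Sum>k\<le>N. smult ((-1) ^ k) ((mulB (aug_letter i) ^^ k) P)) \<in> filV (m + N + 1)"
proof (induction N arbitrary: P m)
  case 0
  then have "mulB (X_inv i) P - (\<Sum>k\<le>0. smult ((-1) ^ k) ((mulB (aug_letter i) ^^ k) P))
      = mulB (X_inv i - oneB) P"
    by (simp add: mulB_diff_left mulB_one_left filV_subset_VB)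
  then show ?case
    using filV_mulB[OF X_inv_minus_oneB_in_augI 0] by simp
next
  case (Suc N)
  let ?b = "mulB (aug_letter i) P"
  let ?S = "\<lambda>Q. \<Sum>k\<le>N. smult ((-1) ^ k) ((mulB (aug_letter i) ^^ k) Q)"
  have IH: "mulB (X_inv i) ?b - ?S ?b \<in> filV (Suc m + N + 1)"
    by (rule Suc.IH[OF filV_mulB[OF aug_letter_in_augI Suc.prems]])
  have "mulB (X_inv i) ?b = P - mulB (X_inv i) P"
    by (simp add: mulB_assoc[symmetric] X_inv_mulB_aug_letter mulB_diff_left mulB_one_left
        filV_subset_VB[OF Suc.prems])
  moreover have "(\<Sum>k\<le>Suc N. smult ((-1) ^ k) ((mulB (aug_letter i) ^^ k) P)) = P - ?S ?b"
    unfolding sum.atMost_Suc_shift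
    by (simp add: smult_neg_left sum_negf funpow_Suc_right del: funpow.simps sum.atMost_Suc)
  ultimately have "mulB (X_inv i) P - (\<Sum>k\<le>Suc N. smult ((-1) ^ k) ((mulB (aug_letter i) ^^ k) P))
      = smult (- 1) (mulB (X_inv i) ?b - ?S ?b)"
    by (simp add: smult_neg_left)
  then show ?case
    using filV_smult[OF IH] by simp
qed

lemma finite_words_upto: "finite {w :: bool list. length w \<le> n}"
  using finite_lists_length_le[of "UNIV :: bool set" n] by simp

text \<open>An element congruent to the group word \<open>g\<close> modulo \<open>F\<^sup>n\<^sup>+\<^sup>1\<close>, built from the Magnus
  coefficients of \<open>g\<close> of degree at most \<open>n\<close>.\<close>

definition magnus_truncation :: "nat \<Rightarrow> letter list \<Rightarrow> letter list \<Rightarrow>\<^sub>0 'k::comm_ring_1" where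
  "magnus_truncation n g = (\<Sum>w | length w \<le> n. smult (magc g w) (aug_monomial w))"

lemma sum_words_upto_Cons:
  "(\<Sum>w | length w \<le> n. smult (case w of [] \<Rightarrow> 0 | b # v \<Rightarrow> if b = i then c v else 0) (aug_monomial w))
   = (\<Sum>v | Suc (length v) \<le> n. smult (c v) (aug_monomial (i # v) :: letter list \<Rightarrow>\<^sub>0 'k::comm_ring_1))"
proof -
  let ?g = "\<lambda>w. smult (case w of [] \<Rightarrow> 0 | b # v \<Rightarrow> if b = i then c v else 0)
      (aug_monomial w :: letter list \<Rightarrow>\<^sub>0 'k)"
  have "(\<Sum>v | Suc (length v) \<le> n. ?g (i # v)) = sum ?g (Cons i ` {v. Suc (length v) \<le> n})"
    by (subst sum.reindex) (auto simp: inj_on_def)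
  also have "\<dots> = sum ?g {w. length w \<le> n}"
    by (rule sum.mono_neutral_left[OF finite_words_upto]) (auto simp: neq_Nil_conv split: list.split)
  finally show ?thesis
    by simp
qed

lemma magnus_truncation_Cons_pos:
  "mulB (Poly_Mapping.single [(i, False)] 1) (magnus_truncation n g)
     - magnus_truncation n ((i, False) # g) \<in> filV (Suc n)"
proof -
  let ?X = "\<lambda>w. smult (magc g w) (aug_monomial (i # w) :: letter list \<Rightarrow>\<^sub>0 'k::comm_ring_1)"
  have pos: "mulB (Poly_Mapping.single [(i, False)] 1) (magnus_truncation n g) =
      magnus_truncation n g + (\<Sum>w | length w \<le> n. ?X w)"
    by (simp add: magnus_truncation_def single_letter_eq_aug_letter mulB_sum_right mulB_smult_right
        mulB_add_left mulB_one_left aug_monomial_in_VB smult_add sum.distrib)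
  have Cons: "magnus_truncation n ((i, False) # g) =
      magnus_truncation n g + (\<Sum>w | Suc (length w) \<le> n. ?X w)"
    by (simp add: magnus_truncation_def smult_add_left sum.distrib sum_words_upto_Cons
        cong: list.case_cong)
  have diff: "(\<Sum>w | length w \<le> n. ?X w) - (\<Sum>w | Suc (length w) \<le> n. ?X w)
      = (\<Sum>w | length w = n. ?X w)"
    by (subst sum_diff[symmetric]) (auto intro!: sum.cong finite_words_upto)
  have "(\<Sum>w | length w = n. ?X w) \<in> filV (Suc n)"
    using aug_monomial_filV[of "i # _"] by (auto intro!: filV_sum filV_smult)
  then show ?thesis
    unfolding pos Cons add_diff_cancel_left diff .
qed

lemma magnus_truncation_Cons_inv_sum:
  "(\<Sum>w | length w \<le> n. smult (magc g w)
      (\<Sum>k\<le>n - length w. smult ((-1) ^ k) ((mulB (aug_letter i) ^^ k) (aug_monomial w))))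
   = (magnus_truncation n ((i, True) # g) :: letter list \<Rightarrow>\<^sub>0 'k::comm_ring_1)"
proof -
  let ?W = "{w :: bool list. length w \<le> n}"
  let ?S2 = "Sigma ?W (\<lambda>w. {..n - length w})"
  let ?S1' = "Sigma ?W (\<lambda>v. {0..length v})"
  let ?S1 = "{x \<in> ?S1'. take (snd x) (fst x) = replicate (snd x) i}"
  let ?G2 = "\<lambda>w k. smult (magc g w * (-1) ^ k) (aug_monomial (replicate k i @ w) :: letter list \<Rightarrow>\<^sub>0 'k)"
  let ?F1 = "\<lambda>(v, k). smult ((-1) ^ k * magc g (drop k v)) (aug_monomial v :: letter list \<Rightarrow>\<^sub>0 'k)"
  have "(\<Sum>w\<in>?W. smult (magc g w)
      (\<Sum>k\<le>n - length w. smult ((-1) ^ k) ((mulB (aug_letter i) ^^ k) (aug_monomial w))))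
      = (\<Sum>w\<in>?W. \<Sum>k\<le>n - length w. ?G2 w k)"
    by (simp add: smult_sum smult_smult aug_monomial_replicate_append)
  also have "\<dots> = sum (case_prod ?G2) ?S2"
    by (rule sum.Sigma) (auto simp: finite_words_upto)
  also have "\<dots> = sum ?F1 ?S1"
    by (rule sum.reindex_bij_witness[where j = "\<lambda>(w, k). (replicate k i @ w, k)"
          and i = "\<lambda>(v, k). (drop k v, k)"])
       (auto simp: mult.commute, metis append_take_drop_id)
  also have "\<dots> = (\<Sum>x\<in>?S1'. if take (snd x) (fst x) = replicate (snd x) i then ?F1 x else 0)"
    by (rule sum.inter_filter) (simp add: finite_words_upto)
  also have "\<dots> = (\<Sum>v\<in>?W. \<Sum>k\<in>{0..length v}.
      if take k v = replicate k i then ?F1 (v, k) else 0)"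
    by (subst sum.Sigma) (auto simp: finite_words_upto intro!: sum.cong)
  also have "\<dots> = magnus_truncation n ((i, True) # g)"
    unfolding magnus_truncation_def by (auto simp: smult_sum_left intro!: sum.cong)
  finally show ?thesis .
qed

lemma magnus_truncation_Cons_inv:
  "mulB (X_inv i) (magnus_truncation n g) - magnus_truncation n ((i, True) # g)
     \<in> (filV (Suc n) :: (letter list \<Rightarrow>\<^sub>0 'k::comm_ring_1) set)"
proof -
  define R where "R w = (\<Sum>k\<le>n - length w.
      smult ((-1) ^ k) ((mulB (aug_letter i) ^^ k) (aug_monomial w :: letter list \<Rightarrow>\<^sub>0 'k::comm_ring_1)))"
    for w
  have "mulB (X_inv i) (magnus_truncation n g) - magnus_truncation n ((i, True) # g)
      = (\<Sum>w | length w \<le> n. smult (magc g w) (mulB (X_inv i) (aug_monomial w) - R w))"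
    unfolding magnus_truncation_Cons_inv_sum[symmetric] R_def
    by (simp add: magnus_truncation_def mulB_sum_right mulB_smult_right smult_diff sum_subtractf)
  also have "\<dots> \<in> filV (Suc n)"
  proof (intro filV_sum filV_smult)
    fix w :: "bool list" assume "w \<in> {w. length w \<le> n}"
    then have "length w + (n - length w) + 1 = Suc n"
      by simp
    then show "mulB (X_inv i) (aug_monomial w) - R w \<in> filV (Suc n)"
      unfolding R_def using X_inv_expansion[OF aug_monomial_filV, of i w "n - length w"] by simp
  qed
  finally show ?thesis .
qed

lemma single_red_minus_magnus_truncation:
  "Poly_Mapping.single (red g) (1::'k::comm_ring_1) - magnus_truncation n g \<in> filV (Suc n)"
proof (induction g)
  case Nil
  have "(magnus_truncation n [] :: letter list \<Rightarrow>\<^sub>0 'k) =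
      (\<Sum>w :: bool list | length w \<le> n. if w = [] then oneB else 0)"
    unfolding magnus_truncation_def by (rule sum.cong) auto
  also have "\<dots> = oneB"
    by (simp add: finite_words_upto)
  finally show ?case
    by (simp add: oneB_def filV_zero)
next
  case (Cons a g)
  obtain i s where a: "a = (i, s)" by (cases a)
  define L where "L = (Poly_Mapping.single [a] 1 :: letter list \<Rightarrow>\<^sub>0 'k)"
  have "Poly_Mapping.single (red (a # g)) 1 = mulB L (Poly_Mapping.single (red g) 1)"
    using red_red_append_right[of "[a]" g] by (simp add: L_def mulB_single)
  then have split: "Poly_Mapping.single (red (a # g)) 1 - magnus_truncation n (a # g) =
      mulB L (Poly_Mapping.single (red g) 1 - magnus_truncation n g)
      + (mulB L (magnus_truncation n g) - magnus_truncation n (a # g))"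
    by (simp add: mulB_diff_right)
  have "mulB L (Poly_Mapping.single (red g) 1 - magnus_truncation n g) \<in> filV (Suc n)"
    by (rule filV_mulB_left[OF _ Cons.IH]) (simp add: L_def VB_single_letter)
  moreover have "mulB L (magnus_truncation n g) - magnus_truncation n (a # g) \<in> filV (Suc n)"
    using magnus_truncation_Cons_pos magnus_truncation_Cons_inv
    by (cases s) (simp_all add: L_def a X_inv_def)
  ultimately show ?case
    unfolding split by (rule filV_add)
qed

lemma filV_Suc_of_magnus_vanish:
  fixes f :: "letter list \<Rightarrow>\<^sub>0 'k::comm_ring_1"
  assumes f: "f \<in> VB" and vanish: "\<And>w. length w \<le> n \<Longrightarrow> magnus f w = 0"
  shows "f \<in> filV (Suc n)"
proof -
  have "f = (\<Sum>g\<in>keys f. smult (lookup f g) (Poly_Mapping.single (red g) 1))"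
    using f by (subst sum_single_lookup) (auto simp: smult_single VB_def reduced_def intro!: sum.cong)
  moreover have "(\<Sum>g\<in>keys f. smult (lookup f g) (magnus_truncation n g :: letter list \<Rightarrow>\<^sub>0 'k)) =
      (\<Sum>w | length w \<le> n. smult (magnus f w) (aug_monomial w))"
    by (simp add: magnus_truncation_def magnus_def smult_sum smult_smult smult_sum_left
        sum.swap[of _ "keys f"])
  moreover have "\<dots> = 0"
    by (simp add: vanish)
  ultimately have "f = (\<Sum>g\<in>keys f. smult (lookup f g)
      (Poly_Mapping.single (red g) 1 - magnus_truncation n g))"
    by (simp add: smult_diff sum_subtractf)
  also have "\<dots> \<in> filV (Suc n)"
    by (intro filV_sum filV_smult single_red_minus_magnus_truncation)
  finally show ?thesis .
qed

theorem filV_iff_magnus_vanish: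
  "f \<in> filV n \<longleftrightarrow> f \<in> VB \<and> (\<forall>w. length w < n \<longrightarrow> magnus f w = 0)"
proof (cases n)
  case (Suc m)
  then show ?thesis
    using filV_subset_VB magnus_vanish_filV filV_Suc_of_magnus_vanish[of f m] by auto
qed (simp add: filV_subset_VB)

lemma WB_iff: "x \<in> WB \<longleftrightarrow> (\<exists>c y. y \<in> VB \<and> x = smult c oneB + mulB y (X1 - oneB))"
  by (auto simp: WB_def)

lemma WB_intro: "y \<in> VB \<Longrightarrow> smult c oneB + mulB y (X1 - oneB) \<in> WB"
  by (auto simp: WB_iff)

lemma WB_subset_VB: "x \<in> WB \<Longrightarrow> x \<in> VB"
  by (auto simp: WB_iff intro!: VB_add VB_smult oneB_in_VB mulB_in_VB)

lemma WB_oneB: "oneB \<in> WB"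
  using WB_intro[of 0 1] by simp

lemma WB_add: "x \<in> WB \<Longrightarrow> y \<in> WB \<Longrightarrow> x + y \<in> WB"
proof -
  assume "x \<in> WB" "y \<in> WB"
  then obtain c z d z' where "z \<in> VB" "x = smult c oneB + mulB z (X1 - oneB)"
    "z' \<in> VB" "y = smult d oneB + mulB z' (X1 - oneB)"
    by (auto simp: WB_iff)
  then have "z + z' \<in> VB" "x + y = smult (c + d) oneB + mulB (z + z') (X1 - oneB)"
    by (simp_all add: VB_add smult_add_left mulB_add_left algebra_simps)
  then show ?thesis
    by (metis WB_intro)
qed

lemma WB_smult: "x \<in> WB \<Longrightarrow> smult e x \<in> WB"
proof -
  assume "x \<in> WB"
  then obtain c z where "z \<in> VB" "x = smult c oneB + mulB z (X1 - oneB)"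
    by (auto simp: WB_iff)
  then have "smult e z \<in> VB" "smult e x = smult (e * c) oneB + mulB (smult e z) (X1 - oneB)"
    by (simp_all add: VB_smult smult_add smult_smult mulB_smult_left)
  then show ?thesis
    by (metis WB_intro)
qed

lemma WB_diff: "x \<in> WB \<Longrightarrow> y \<in> WB \<Longrightarrow> x - y \<in> WB"
  using WB_add[of x "smult (- 1) y"] WB_smult[of y "- 1"] by (simp add: smult_neg_left)

lemma WB_sum: "(\<And>i. i \<in> I \<Longrightarrow> F i \<in> WB) \<Longrightarrow> (\<Sum>i\<in>I. F i) \<in> WB"
  by (induction I rule: infinite_finite_induct) (auto intro: WB_add WB_smult[of oneB 0, simplified] WB_oneB)

lemma WB_mulB: "x \<in> WB \<Longrightarrow> y \<in> WB \<Longrightarrow> mulB x y \<in> WB"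
proof -
  assume "x \<in> WB" "y \<in> WB"
  then obtain c z d z' where z: "z \<in> VB" "x = smult c oneB + mulB z (X1 - oneB)"
    and z': "z' \<in> VB" "y = smult d oneB + mulB z' (X1 - oneB)"
    by (auto simp: WB_iff)
  let ?b = "X1 - oneB"
  have "mulB x y = smult (c * d) oneB + mulB (smult c z' + smult d z + mulB (mulB z ?b) z') ?b"
    unfolding z z'
    by (simp add: mulB_add_left mulB_add_right mulB_smult_left mulB_smult_right mulB_one_left
        mulB_one_right oneB_in_VB mulB_in_VB smult_smult mulB_assoc smult_add algebra_simps
        X1_minus_oneB_in_VB)
  moreover have "smult c z' + smult d z + mulB (mulB z ?b) z' \<in> VB"
    using z z' by (intro VB_add VB_smult mulB_in_VB)
  ultimately show ?thesis
    by (metis WB_intro)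
qed

lemma genB_in_WB: "genB n \<in> WB"
  using WB_intro[of "X0pow n" 0] by (simp add: genB_def X0pow_def VB_single reduced_iff_cancel_free
      cancel_free_replicate)

lemma magnus_X1_minus_oneB: "magnus (X1 - oneB) = word_series [True]"
  by (auto simp: fun_eq_iff X1_def magnus_diff magnus_single_letter magnus_oneB letter_series_def
      word_series_def)

lemma magnus_WB_not_last: "x \<in> WB \<Longrightarrow> w \<noteq> [] \<Longrightarrow> \<not> last w \<Longrightarrow> magnus x w = 0"
  by (auto simp: WB_iff magnus_add magnus_smult magnus_oneB magnus_mulB magnus_X1_minus_oneB
      series_mult_letter_right word_series_def)


lemma finite_words_eq: "finite {w :: bool list. length w = n}"
  by (rule finite_subset[OF _ finite_words_upto[of n]]) auto

lemma lookup_beta1: "lookup (beta1 n f) w = (if length w = n then magnus f w else 0)"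
  using finite_words_eq[of n]
  by (simp add: beta1_def lookup_sum lookup_single_if magnus_def if_distrib[of "\<lambda>x. x = _"]
      sum.delta cong: if_cong)

lemma lookup_beta2:
  "lookup (beta2 n F) pq = (if length (fst pq) + length (snd pq) = n then magnus2 F pq else 0)"
proof -
  have "finite {(u :: bool list, v :: bool list). length u + length v = n}"
    by (rule finite_subset[of _ "{w. length w \<le> n} \<times> {w. length w \<le> n}"])
       (auto simp: finite_words_upto)
  then show ?thesis
    by (cases pq) (simp add: beta2_def lookup_sum lookup_single_if magnus2_def sum.delta)
qed

lemma beta2_add: "beta2 n (F + G) = beta2 n F + beta2 n G"
  by (rule poly_mapping_eqI) (simp add: lookup_beta2 lookup_add magnus2_add)

lemma beta2_smult: "beta2 n (smult c F) = smult c (beta2 n F)"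
  by (rule poly_mapping_eqI) (simp add: lookup_beta2 magnus2_smult)

lemma beta2_sum: "beta2 n (\<Sum>i\<in>I. F i) = (\<Sum>i\<in>I. beta2 n (F i))"
proof (induction I rule: infinite_finite_induct)
  case (infinite A)
  then show ?case by (intro poly_mapping_eqI) (simp add: lookup_beta2)
next
  case empty
  then show ?case by (intro poly_mapping_eqI) (simp add: lookup_beta2)
qed (simp add: beta2_add)

lemma beta2_eq_0: "(\<And>p q. length p + length q \<le> n \<Longrightarrow> magnus2 F (p, q) = 0) \<Longrightarrow> beta2 n F = 0"
  by (rule poly_mapping_eqI) (auto simp: lookup_beta2)

lemma lookup_tens: "lookup (tens a b) (p, q) = lookup a p * lookup b q"
proof -
  have "lookup (tens a b) (p, q) =
      (\<Sum>u\<in>keys a. \<Sum>v\<in>keys b. if p = u \<and> q = v then lookup a u * lookup b v else 0)"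
    by (simp add: tens_def lookup_sum lookup_single_if)
  also have "\<dots> =
      (\<Sum>u\<in>keys a. if p = u then (\<Sum>v\<in>keys b. if q = v then lookup a u * lookup b v else 0) else 0)"
    by (intro sum.cong refl) auto
  finally show ?thesis
    by (simp add: sum.delta in_keys_iff)
qed

lemma bij_betw_splits:
  "bij_betw (\<lambda>(i, j). ((take i p, take j q), (drop i p, drop j q)))
     ({..length p} \<times> {..length q})
     {(x, y). fst x @ fst y = p \<and> snd x @ snd y = q}"
proof (rule bij_betw_byWitness[where f' = "\<lambda>(x, y). (length (fst x), length (snd x))"])
  show "(\<lambda>(i, j). ((take i p, take j q), drop i p, drop j q)) ` ({..length p} \<times> {..length q})
      \<subseteq> {(x, y). fst x @ fst y = p \<and> snd x @ snd y = q}"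
    by auto
  show "(\<lambda>(x, y). (length (fst x), length (snd x))) ` {(x, y). fst x @ fst y = p \<and> snd x @ snd y = q}
      \<subseteq> {..length p} \<times> {..length q}"
    by auto
qed auto

lemma lookup_mulDD: "lookup (mulDD A B) (p, q) = series_mult2 (lookup A) (lookup B) (p, q)"
proof -
  let ?Spl = "{(x, y). fst x @ fst y = p \<and> snd x @ snd y = q}"
  let ?t = "\<lambda>(x, y). lookup A x * lookup B y"
  have fin: "finite ?Spl"
    using bij_betw_finite[OF bij_betw_splits] by blast
  have "lookup (mulDD A B) (p, q) = (\<Sum>xy\<in>keys A \<times> keys B. if xy \<in> ?Spl then ?t xy else 0)"
    unfolding mulDD_def lookup_conv sum.cartesian_product
    by (intro sum.cong refl) (auto simp: case_prod_beta split: if_splits)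
  also have "\<dots> = sum ?t ((keys A \<times> keys B) \<inter> ?Spl)"
    by (rule sum.inter_restrict[symmetric]) simp
  also have "\<dots> = sum ?t ?Spl"
    by (rule sum.mono_neutral_left[OF fin]) (auto simp: in_keys_iff)
  also have "\<dots> = (\<Sum>(i, j)\<in>{..length p} \<times> {..length q}.
      lookup A (take i p, take j q) * lookup B (drop i p, drop j q))"
    by (subst sum.reindex_bij_betw[OF bij_betw_splits, symmetric]) (simp add: case_prod_beta)
  also have "\<dots> = series_mult2 (lookup A) (lookup B) (p, q)"
    by (simp add: series_mult2_def sum.cartesian_product)
  finally show ?thesis .
qed

lemma graded_product_term:
  fixes x y :: "'k::comm_ring_1" and a b n i j :: nat
  assumes "a + b = n" "a < i \<Longrightarrow> x = 0" "b < j \<Longrightarrow> y = 0"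
  shows "(if n = i + j then x * y else 0) = (if a = i then x else 0) * (if b = j then y else 0)"
proof (cases "n = i + j")
  case True
  then consider "a < i" | "b < j" | "a = i \<and> b = j"
    using assms(1) by linarith
  then show ?thesis
    by cases (use True assms in auto)
next
  case False
  then have "\<not> (a = i \<and> b = j)"
    using assms(1) by linarith
  then show ?thesis
    using False by auto
qed

lemma beta2_mulBB:
  assumes vF: "\<And>p q. length p + length q < i \<Longrightarrow> magnus2 F (p, q) = 0"
    and vG: "\<And>p q. length p + length q < j \<Longrightarrow> magnus2 G (p, q) = 0"
  shows "beta2 (i + j) (mulBB F G) = mulDD (beta2 i F) (beta2 j G)"
proof (rule poly_mapping_eqI)
  fix pq :: "bool list \<times> bool list"
  obtain p q where pq: "pq = (p, q)" by (cases pq)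
  have "lookup (beta2 (i + j) (mulBB F G)) (p, q) = (\<Sum>i'\<le>length p. \<Sum>j'\<le>length q.
      if length p + length q = i + j
      then magnus2 F (take i' p, take j' q) * magnus2 G (drop i' p, drop j' q) else 0)"
    by (cases "length p + length q = i + j") (simp_all add: lookup_beta2 magnus2_mulBB series_mult2_def)
  also have "\<dots> = series_mult2 (lookup (beta2 i F)) (lookup (beta2 j G)) (p, q)"
    unfolding series_mult2_def lookup_beta2 fst_conv snd_conv
  proof (intro sum.cong refl graded_product_term)
    fix i' j' assume "i' \<in> {..length p}" "j' \<in> {..length q}"
    then show "length (take i' p) + length (take j' q) + (length (drop i' p) + length (drop j' q))
        = length p + length q"
      by auto
  qed (use vF vG in auto)
  also have "\<dots> = lookup (mulDD (beta2 i F) (beta2 j G)) (p, q)"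
    by (simp add: lookup_mulDD)
  finally show "lookup (beta2 (i + j) (mulBB F G)) pq = lookup (mulDD (beta2 i F) (beta2 j G)) pq"
    by (simp add: pq)
qed

lemma magnus2_vanish_filWW:
  assumes "F \<in> filWW n" "length p + length q < n"
  shows "magnus2 F (p, q) = 0"
proof -
  have "F \<in> addspan {tens a b | a b i j. i + j = n \<and> a \<in> filW i \<and> b \<in> filW j}"
    using assms(1) by (simp add: filWW_def)
  then show ?thesis
  proof (induction F rule: addspan.induct)
    case (gen x)
    then obtain a b i j where x: "x = tens a b" "i + j = n" "a \<in> filV i" "b \<in> filV j"
      by (auto simp: filW_def)
    then have "length p < i \<or> length q < j"
      using assms(2) by arith
    then show ?case
      using magnus_vanish_filV[OF x(3), of p] magnus_vanish_filV[OF x(4), of q]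
      by (auto simp: x(1) magnus2_tens)
  qed (simp_all add: magnus2_add)
qed


context
  fixes DB :: "(letter list \<Rightarrow>\<^sub>0 'k::comm_ring_1) \<Rightarrow> (letter list \<times> letter list \<Rightarrow>\<^sub>0 'k)"
  assumes DB: "is_DeltaB DB"
begin

lemma DeltaB_add: "x \<in> WB \<Longrightarrow> y \<in> WB \<Longrightarrow> DB (x + y) = DB x + DB y"
  and DeltaB_mulB: "x \<in> WB \<Longrightarrow> y \<in> WB \<Longrightarrow> DB (mulB x y) = mulBB (DB x) (DB y)"
  and DeltaB_smult: "x \<in> WB \<Longrightarrow> DB (smult c x) = smult c (DB x)"
  and DeltaB_oneB: "DB oneB = tens oneB oneB"
  and DeltaB_genB: "DB (genB n) = tens (genB n) oneB + tens oneB (genB n)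
                      - csum 1 (n - 1) (\<lambda>k. tens (genB k) (genB (n - k)))"
  and DeltaB_filW: "x \<in> filW m \<Longrightarrow> DB x \<in> filWW m"
  using DB by (simp_all add: is_DeltaB_def)

lemma DeltaB_lincomb:
  "(\<And>i. i \<in> I \<Longrightarrow> X i \<in> WB) \<Longrightarrow> DB (\<Sum>i\<in>I. smult (c i) (X i)) = (\<Sum>i\<in>I. smult (c i) (DB (X i)))"
proof (induction I rule: infinite_finite_induct)
  case (insert a A)
  then show ?case
    by (simp add: DeltaB_add DeltaB_smult WB_smult WB_sum)
qed (use DeltaB_smult[OF WB_oneB, of 0] in simp_all)

lemma magnus2_DeltaB_vanish:
  "x \<in> filW m \<Longrightarrow> length p + length q < m \<Longrightarrow> magnus2 (DB x) (p, q) = 0"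
  by (rule magnus2_vanish_filWW[OF DeltaB_filW])

lemma beta2_DeltaB_filW_Suc: "x \<in> filW (Suc n) \<Longrightarrow> beta2 n (DB x) = 0"
  by (rule beta2_eq_0) (simp add: magnus2_DeltaB_vanish)

end

lemma WDR_add: "x \<in> WDR \<Longrightarrow> y \<in> WDR \<Longrightarrow> x + y \<in> WDR"
proof -
  assume "x \<in> WDR" "y \<in> WDR"
  then obtain c z d z' where "x = smult c oneD + mulD z e1" "y = smult d oneD + mulD z' e1"
    by (auto simp: WDR_def)
  then have "x + y = smult (c + d) oneD + mulD (z + z') e1"
    by (simp add: smult_add_left mulD_def conv_add_left algebra_simps)
  then show ?thesis
    by (auto simp: WDR_def)
qed

lemma mulD_single:
  "mulD (Poly_Mapping.single u a) (Poly_Mapping.single v b) = Poly_Mapping.single (u @ v) (a * b)"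
  by (simp add: mulD_def conv_single)

lemma single_in_WDR: "w = [] \<or> last w \<Longrightarrow> Poly_Mapping.single w c \<in> WDR"
proof (cases w rule: rev_cases)
  case Nil
  then have "Poly_Mapping.single w c = smult c oneD + mulD 0 e1"
    by (simp add: oneD_def smult_single mulD_def)
  then show ?thesis
    unfolding WDR_def by blast
next
  case (snoc v b)
  moreover assume "w = [] \<or> last w"
  ultimately have "Poly_Mapping.single w c = smult 0 oneD + mulD (Poly_Mapping.single v c) e1"
    by (simp add: e1_def mulD_single)
  then show ?thesis
    unfolding WDR_def by blast
qed

lemma sum_single_in_WDR:
  "(\<And>w. w \<in> S \<Longrightarrow> w = [] \<or> last w) \<Longrightarrow> (\<Sum>w\<in>S. Poly_Mapping.single w (c w)) \<in> WDR"
  by (induction S rule: infinite_finite_induct)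
     (auto intro: WDR_add single_in_WDR single_in_WDR[of "[]" 0, simplified])

context
  fixes DD :: "(bool list \<Rightarrow>\<^sub>0 'k::comm_ring_1) \<Rightarrow> (bool list \<times> bool list \<Rightarrow>\<^sub>0 'k)"
  assumes DD: "is_DeltaDR DD"
begin

lemma DeltaDR_add: "x \<in> WDR \<Longrightarrow> y \<in> WDR \<Longrightarrow> DD (x + y) = DD x + DD y"
  and DeltaDR_mulD: "x \<in> WDR \<Longrightarrow> y \<in> WDR \<Longrightarrow> DD (mulD x y) = mulDD (DD x) (DD y)"
  and DeltaDR_smult: "x \<in> WDR \<Longrightarrow> DD (smult c x) = smult c (DD x)"
  and DeltaDR_oneD: "DD oneD = tens oneD oneD"
  and DeltaDR_genD: "DD (genD n) = tens (genD n) oneD + tens oneD (genD n)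
                       - (\<Sum>k<n. tens (genD k) (genD (n - k - 1)))"
  using DD by (simp_all add: is_DeltaDR_def)

lemma DeltaDR_sum_single:
  assumes "\<And>w. w \<in> S \<Longrightarrow> w = [] \<or> last w"
  shows "DD (\<Sum>w\<in>S. Poly_Mapping.single w (c w)) = (\<Sum>w\<in>S. smult (c w) (DD (Poly_Mapping.single w 1)))"
  using assms
proof (induction S rule: infinite_finite_induct)
  case (insert a A)
  have "a = [] \<or> last a"
    using insert.prems by simp
  then have "DD (smult (c a) (Poly_Mapping.single a 1)) = smult (c a) (DD (Poly_Mapping.single a 1))"
    by (intro DeltaDR_smult single_in_WDR)
  then have "DD (Poly_Mapping.single a (c a)) = smult (c a) (DD (Poly_Mapping.single a 1))"
    by (simp add: smult_single)
  with insert show ?case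
    by (simp add: DeltaDR_add single_in_WDR sum_single_in_WDR)
qed (use DeltaDR_smult[OF single_in_WDR[of "[]" 1], of 0] in simp_all)

end

section \<open>Binomial identities\<close>

lemma alternating_sum_choose_choose:
  "(\<Sum>k\<le>m. (-1) ^ (m - k) * of_nat (m choose k) * of_nat (k choose a) :: 'k::comm_ring_1)
     = (if a = m then 1 else 0)"
proof (cases "a \<le> m")
  case True
  define N where "N = m - a"
  let ?f = "\<lambda>k. (-1) ^ (m - k) * of_nat (m choose k) * of_nat (k choose a) :: 'k"
  have "(\<Sum>k\<le>m. ?f k) = (\<Sum>k\<in>{a..m}. ?f k)"
    by (rule sum.mono_neutral_right) (auto simp: binomial_eq_0)
  also have "\<dots> = (\<Sum>j\<le>N. ?f (j + a))"
    using sum.shift_bounds_cl_nat_ivl[of ?f 0 a N] True by (simp add: N_def atLeast0AtMost)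
  also have "\<dots> = (\<Sum>j\<le>N. of_nat (m choose a) * (of_nat (N choose j) * 1 ^ j * (-1) ^ (N - j)))"
  proof (intro sum.cong refl)
    fix j assume "j \<in> {..N}"
    then have "(m choose (j + a)) * ((j + a) choose a) = (m choose a) * (N choose j)"
      using choose_mult[of a "j + a" m] True by (simp add: N_def)
    then have "of_nat (m choose (j + a)) * of_nat ((j + a) choose a) =
        (of_nat (m choose a) * of_nat (N choose j) :: 'k)"
      by (simp flip: of_nat_mult)
    moreover have "m - (j + a) = N - j"
      by (simp add: N_def)
    ultimately have "?f (j + a) = (-1) ^ (N - j) * (of_nat (m choose a) * of_nat (N choose j))"
      by (metis mult.assoc)
    then show "?f (j + a) = of_nat (m choose a) * (of_nat (N choose j) * 1 ^ j * (-1) ^ (N - j))"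
      by (simp add: mult_ac)
  qed
  also have "\<dots> = of_nat (m choose a) * (1 + (-1)) ^ N"
    by (simp only: binomial_ring sum_distrib_left)
  finally show ?thesis
    using True by (cases "a = m") (simp_all add: N_def power_0_left)
qed (auto intro!: sum.neutral simp: binomial_eq_0)

lemma sum_choose_mult_choose_diff:
  "(\<Sum>j\<le>k. (j choose a) * ((k - j) choose b)) = Suc k choose (a + b + 1)"
proof (induction k arbitrary: b)
  case 0
  then show ?case by (cases a; cases b) auto
next
  case (Suc k)
  show ?case
  proof (cases b)
    case 0
    then show ?thesis using sum_choose_upper[of a "Suc k"] by simp
  next
    case (Suc b')
    have "(\<Sum>j\<le>Suc k. (j choose a) * ((Suc k - j) choose b))
        = (\<Sum>j\<le>k. (j choose a) * ((k - j) choose b') + (j choose a) * ((k - j) choose b))"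
      using Suc by (auto simp: Suc_diff_le algebra_simps intro!: sum.cong)
    also have "\<dots> = Suc (Suc k) choose (a + b + 1)"
      using Suc by (simp add: sum.distrib Suc.IH)
    finally show ?thesis .
  qed
qed

text \<open>The coefficients of the correction term in \<open>\<Delta>\<^sup>B(X\<^sub>0\<^sup>k(X\<^sub>1 - 1))\<close>, written with the
  summation convention \<open>csum\<close> (so \<open>k = 0\<close> contributes \<open>-1\<close> when \<open>a = b = 0\<close>).\<close>

definition choose_csum :: "nat \<Rightarrow> nat \<Rightarrow> nat \<Rightarrow> 'k::comm_ring_1" where
  "choose_csum a b k = csum 1 (int k - 1) (\<lambda>j. of_nat (nat j choose a) * of_nat (nat (int k - j) choose b))"

lemma choose_csum_eq:
  "choose_csum a b k = (of_nat (Suc k choose (a + b + 1)) - (if a = 0 then of_nat (k choose b) else 0)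
     - (if b = 0 then of_nat (k choose a) else 0) :: 'k::comm_ring_1)"
proof (cases k)
  case (Suc k')
  then have "{1..int k - 1} = int ` {1..k - 1}"
    by (simp add: image_int_atLeastAtMost of_nat_diff)
  moreover have "nat (int k - int j) = k - j" for j
    by simp
  ultimately have "choose_csum a b k = (\<Sum>j\<in>{1..k - 1}. of_nat (j choose a) * of_nat ((k - j) choose b) :: 'k)"
    using Suc by (simp only: choose_csum_def csum_def sum.reindex inj_on_of_nat) (simp add: Suc)
  moreover have "{..k} = insert 0 (insert k {1..k - 1})"
    using Suc by auto
  then have "(\<Sum>j\<le>k. (j choose a) * ((k - j) choose b)) =
      (0 choose a) * (k choose b) + ((\<Sum>j\<in>{1..k - 1}. (j choose a) * ((k - j) choose b)) + (k choose a) * (0 choose b))"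
    using Suc by (simp add: add.commute)
  ultimately show ?thesis
    unfolding sum_choose_mult_choose_diff[symmetric]
    by (cases a; cases b) (auto simp: algebra_simps of_nat_sum)
qed (cases a; cases b; simp add: choose_csum_def csum_def)

lemma alternating_sum_choose_csum:
  assumes "a + b + 1 = m"
  shows "(\<Sum>k\<le>m. (-1) ^ (m - k) * of_nat (m choose k) * choose_csum a b k :: 'k::comm_ring_1) = 1"
proof -
  let ?e = "\<lambda>k. (-1) ^ (m - k) * of_nat (m choose k) :: 'k"
  obtain m' where m: "m = Suc m'"
    using assms by (cases m) auto
  have "(\<Sum>k\<le>m. ?e k * of_nat (Suc k choose (a + b + 1))) =
      (\<Sum>k\<le>m. ?e k * of_nat (k choose m)) + (\<Sum>k\<le>m. ?e k * of_nat (k choose m'))"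
    using assms m by (simp add: sum.distrib[symmetric] algebra_simps)
  also have "\<dots> = 1"
    using alternating_sum_choose_choose[of m m, where 'k = 'k]
      alternating_sum_choose_choose[of m m', where 'k = 'k] m
    by (simp add: mult.assoc)
  finally have "(\<Sum>k\<le>m. ?e k * of_nat (Suc k choose (a + b + 1))) = 1" .
  moreover have "(\<Sum>k\<le>m. ?e k * of_nat (k choose b)) = 0" "(\<Sum>k\<le>m. ?e k * of_nat (k choose a)) = 0"
    using alternating_sum_choose_choose[of m b, where 'k = 'k]
      alternating_sum_choose_choose[of m a, where 'k = 'k] assms
    by (simp_all add: mult.assoc)
  ultimately show ?thesis
    by (cases "a = 0"; cases "b = 0") (simp_all add: choose_csum_eq algebra_simps sum_subtractf sum.distrib)
qed

definition gen_word :: "nat \<Rightarrow> bool list" where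
  "gen_word a = replicate a False @ [True]"

lemma gen_word_eq_iff [simp]: "gen_word a = gen_word b \<longleftrightarrow> a = b"
  by (auto simp: gen_word_def dest: arg_cong[of _ _ length])

lemma length_gen_word [simp]: "length (gen_word a) = Suc a"
  by (simp add: gen_word_def)

lemma gen_word_ne_Nil [simp]: "gen_word a \<noteq> []" "[] \<noteq> gen_word a"
  by (simp_all add: gen_word_def)

lemma last_gen_word [simp]: "last (gen_word a)"
  by (simp add: gen_word_def)

lemma genD_eq_single_gen_word: "genD m = Poly_Mapping.single (gen_word m) 1"
  by (simp add: genD_def gen_word_def)

lemma ex_gen_word_iff:
  "(\<exists>a. w = gen_word a) \<longleftrightarrow> w \<noteq> [] \<and> last w \<and> butlast w = replicate (length (butlast w)) False"
proof
  assume "w \<noteq> [] \<and> last w \<and> butlast w = replicate (length (butlast w)) False"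
  then have "w = gen_word (length (butlast w))"
    unfolding gen_word_def by (metis append_butlast_last_id)
  then show "\<exists>a. w = gen_word a" ..
qed (auto simp: gen_word_def)

lemma gen_word_decomposition:
  assumes "w \<noteq> []" "last w"
  obtains a v where "w = gen_word a @ v" "v = [] \<or> last v"
proof -
  have "True \<in> set w"
    using assms by (metis last_in_set)
  then have ne: "dropWhile Not w \<noteq> []"
    by (auto simp: dropWhile_eq_Nil_conv)
  then obtain d v where dv: "dropWhile Not w = d # v"
    by (cases "dropWhile Not w") auto
  have d: "d"
    using hd_dropWhile[OF ne] dv by simp
  define a where "a = length (takeWhile Not w)"
  have "takeWhile Not w = replicate a False"
    unfolding a_def by (rule replicate_length_same[symmetric]) (auto dest: set_takeWhileD)
  then have w: "w = gen_word a @ v"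
    using takeWhile_dropWhile_id[of Not w] dv d by (simp add: gen_word_def)
  moreover have "v = [] \<or> last v"
    using assms w by (cases "v = []") auto
  ultimately show thesis
    using that by blast
qed

lemma magc_X0_replicate:
  "magc (replicate k (False, False)) w =
     (if w = replicate (length w) False then of_nat (k choose length w) else 0)"
proof (induction k arbitrary: w)
  case 0
  then show ?case by (cases w) auto
next
  case (Suc k)
  then show ?case by (cases w) (auto split: bool.split)
qed

lemma magnus_genB:
  "magnus (genB (int k)) w = (if \<exists>a. w = gen_word a then of_nat (k choose (length w - 1)) else 0)"
  by (auto simp: genB_def magnus_mulB magnus_X1_minus_oneB series_mult_letter_right X0pow_def
      magnus_single magc_X0_replicate ex_gen_word_iff)

text \<open>\<open>(X\<^sub>0 - 1)\<^sup>m (X\<^sub>1 - 1)\<close>, expanded binomially into the generators \<open>X\<^sub>0\<^sup>k (X\<^sub>1 - 1)\<close>.\<close>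

definition aug_gen :: "nat \<Rightarrow> letter list \<Rightarrow>\<^sub>0 'k::comm_ring_1" where
  "aug_gen m = (\<Sum>k\<le>m. smult ((-1) ^ (m - k) * of_nat (m choose k)) (genB (int k)))"

lemma aug_gen_in_WB: "aug_gen m \<in> WB"
  unfolding aug_gen_def by (intro WB_sum WB_smult genB_in_WB)

lemma magnus_aug_gen: "magnus (aug_gen m) = word_series (gen_word m)"
proof
  fix w
  show "magnus (aug_gen m) w = word_series (gen_word m) w"
  proof (cases "\<exists>a. w = gen_word a")
    case True
    then obtain a where "w = gen_word a" ..
    then show ?thesis
      using alternating_sum_choose_choose[of m a]
      by (simp add: aug_gen_def magnus_sum magnus_smult magnus_genB word_series_def mult.assoc)
  qed (auto simp: aug_gen_def magnus_sum magnus_smult magnus_genB word_series_def)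
qed

lemma filW_of_magnus_word_series:
  "Y \<in> WB \<Longrightarrow> magnus Y = word_series w \<Longrightarrow> Y \<in> filW (length w)"
  by (simp add: filW_def filV_iff_magnus_vanish WB_subset_VB word_series_def)

lemma magnus2_csum: "magnus2 (csum a b F) pq = csum a b (\<lambda>j. magnus2 (F j) pq)"
  by (simp add: csum_def magnus2_sum magnus2_uminus)

lemma csum_cong_upto:
  "(\<And>j. 0 \<le> j \<Longrightarrow> j \<le> int k \<Longrightarrow> f j = g j) \<Longrightarrow> csum 1 (int k - 1) f = csum 1 (int k - 1) g"
  by (auto simp: csum_def intro!: sum.cong)

lemma magnus2_DeltaB_genB:
  fixes DB :: "(letter list \<Rightarrow>\<^sub>0 'k::comm_ring_1) \<Rightarrow> (letter list \<times> letter list \<Rightarrow>\<^sub>0 'k)"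
  assumes DB: "is_DeltaB DB"
  shows "magnus2 (DB (genB (int k))) (p, q) =
      magnus (genB (int k)) p * word_series [] q + word_series [] p * magnus (genB (int k)) q
      - (if (\<exists>a. p = gen_word a) \<and> (\<exists>b. q = gen_word b)
         then choose_csum (length p - 1) (length q - 1) k else 0)"
proof -
  let ?f = "\<lambda>j. magnus (genB j) p * magnus (genB (int k - j)) q :: 'k"
  have "\<And>j. 0 \<le> j \<Longrightarrow> j \<le> int k \<Longrightarrow> ?f j =
      (if (\<exists>a. p = gen_word a) \<and> (\<exists>b. q = gen_word b)
       then of_nat (nat j choose (length p - 1)) * of_nat (nat (int k - j) choose (length q - 1)) else 0)"
  proof -
    fix j :: int assume "0 \<le> j" "j \<le> int k"
    then have "(magnus (genB j) p :: 'k) = (if \<exists>a. p = gen_word a then of_nat (nat j choose (length p - 1)) else 0)"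
      and "(magnus (genB (int k - j)) q :: 'k) =
        (if \<exists>b. q = gen_word b then of_nat (nat (int k - j) choose (length q - 1)) else 0)"
      using magnus_genB[of "nat j" p] magnus_genB[of "nat (int k - j)" q] by simp_all
    then show "?thesis j"
      by auto
  qed
  then have "csum 1 (int k - 1) ?f = (if (\<exists>a. p = gen_word a) \<and> (\<exists>b. q = gen_word b)
      then choose_csum (length p - 1) (length q - 1) k else 0)"
    by (subst csum_cong_upto) (auto simp: choose_csum_def csum_def)
  then show ?thesis
    by (simp add: DeltaB_genB[OF DB] magnus2_diff magnus2_add magnus2_tens magnus2_csum magnus_oneB)
qed

lemma sum_gen_word_pairs:
  "(\<Sum>k<m. word_series (gen_word k) p * word_series (gen_word (m - k - 1)) q :: 'k::comm_ring_1) =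
     (if \<exists>a b. p = gen_word a \<and> q = gen_word b \<and> a + b + 1 = m then 1 else 0)"
proof (cases "\<exists>a b. p = gen_word a \<and> q = gen_word b \<and> a + b + 1 = m")
  case True
  then obtain a b where "p = gen_word a" "q = gen_word b" "a + b + 1 = m"
    by blast
  then have "(\<Sum>k<m. word_series (gen_word k) p * word_series (gen_word (m - k - 1)) q :: 'k) =
      (\<Sum>k<m. if k = a then 1 else 0)"
    by (intro sum.cong refl) (auto simp: word_series_def)
  then show ?thesis
    using True \<open>a + b + 1 = m\<close> by simp
next
  case False
  then show ?thesis
    by (auto simp: word_series_def intro!: sum.neutral)
qed

lemma lookup_DeltaDR_genD:
  fixes DD :: "(bool list \<Rightarrow>\<^sub>0 'k::comm_ring_1) \<Rightarrow> (bool list \<times> bool list \<Rightarrow>\<^sub>0 'k)"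
  assumes DD: "is_DeltaDR DD"
  shows "lookup (DD (genD m)) (p, q) =
      word_series (gen_word m) p * word_series [] q + word_series [] p * word_series (gen_word m) q
      - (\<Sum>k<m. word_series (gen_word k) p * word_series (gen_word (m - k - 1)) q)"
  unfolding DeltaDR_genD[OF DD]
  by (simp add: lookup_minus lookup_add lookup_tens lookup_sum oneD_def genD_eq_single_gen_word
      lookup_single_if word_series_def)

lemma magnus2_DeltaB_aug_gen:
  fixes DB :: "(letter list \<Rightarrow>\<^sub>0 'k::comm_ring_1) \<Rightarrow> (letter list \<times> letter list \<Rightarrow>\<^sub>0 'k)"
  assumes DB: "is_DeltaB DB"
  shows "magnus2 (DB (aug_gen m)) (p, q) =
      word_series (gen_word m) p * word_series [] q + word_series [] p * word_series (gen_word m) q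
      - (\<Sum>k\<le>m. (-1) ^ (m - k) * of_nat (m choose k) *
          (if (\<exists>a. p = gen_word a) \<and> (\<exists>b. q = gen_word b)
           then choose_csum (length p - 1) (length q - 1) k else 0))"
  by (simp add: aug_gen_def DeltaB_lincomb[OF DB] genB_in_WB magnus2_sum magnus2_smult
      magnus2_DeltaB_genB[OF DB] magnus_sum magnus_smult algebra_simps sum.distrib sum_subtractf
      sum_distrib_left sum_distrib_right flip: magnus_aug_gen)

lemma beta2_DeltaB_aug_gen:
  fixes DB :: "(letter list \<Rightarrow>\<^sub>0 'k::comm_ring_1) \<Rightarrow> (letter list \<times> letter list \<Rightarrow>\<^sub>0 'k)"
    and DD :: "(bool list \<Rightarrow>\<^sub>0 'k) \<Rightarrow> (bool list \<times> bool list \<Rightarrow>\<^sub>0 'k)"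
  assumes DB: "is_DeltaB DB" and DD: "is_DeltaDR DD"
  shows "beta2 (Suc m) (DB (aug_gen m)) = DD (genD m)"
proof (rule poly_mapping_eqI)
  fix pq :: "bool list \<times> bool list"
  obtain p q where pq: "pq = (p, q)" by (cases pq)
  show "lookup (beta2 (Suc m) (DB (aug_gen m))) pq = lookup (DD (genD m)) pq"
  proof (cases "(\<exists>a. p = gen_word a) \<and> (\<exists>b. q = gen_word b) \<and> length p + length q = Suc m")
    case True
    then obtain a b where "p = gen_word a" "q = gen_word b" "a + b + 1 = m"
      by auto
    then show ?thesis
      unfolding pq lookup_beta2 lookup_DeltaDR_genD[OF DD] sum_gen_word_pairs
      using alternating_sum_choose_csum[of a b m, where 'k = 'k]
      by (auto simp: magnus2_DeltaB_aug_gen[OF DB])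
  next
    case False
    then show ?thesis
      by (auto simp: pq lookup_beta2 magnus2_DeltaB_aug_gen[OF DB] lookup_DeltaDR_genD[OF DD]
          sum_gen_word_pairs word_series_def intro!: sum.neutral)
  qed
qed

lemma beta2_DeltaB_oneB:
  fixes DB :: "(letter list \<Rightarrow>\<^sub>0 'k::comm_ring_1) \<Rightarrow> (letter list \<times> letter list \<Rightarrow>\<^sub>0 'k)"
    and DD :: "(bool list \<Rightarrow>\<^sub>0 'k) \<Rightarrow> (bool list \<times> bool list \<Rightarrow>\<^sub>0 'k)"
  assumes DB: "is_DeltaB DB" and DD: "is_DeltaDR DD"
  shows "beta2 0 (DB oneB) = DD (Poly_Mapping.single [] 1)"
proof (rule poly_mapping_eqI)
  fix pq :: "bool list \<times> bool list"
  have "DD (Poly_Mapping.single [] 1) = tens oneD oneD"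
    using DeltaDR_oneD[OF DD] by (simp add: oneD_def)
  then show "lookup (beta2 0 (DB oneB)) pq = lookup (DD (Poly_Mapping.single [] 1)) pq"
    by (cases pq) (simp add: DeltaB_oneB[OF DB] lookup_beta2 magnus2_tens magnus_oneB
        word_series_def lookup_tens oneD_def lookup_single_if)
qed

lemma beta2_DeltaB_lift_word:
  fixes DB :: "(letter list \<Rightarrow>\<^sub>0 'k::comm_ring_1) \<Rightarrow> (letter list \<times> letter list \<Rightarrow>\<^sub>0 'k)"
    and DD :: "(bool list \<Rightarrow>\<^sub>0 'k) \<Rightarrow> (bool list \<times> bool list \<Rightarrow>\<^sub>0 'k)"
  assumes DB: "is_DeltaB DB" and DD: "is_DeltaDR DD" and w: "w = [] \<or> last w"
  shows "\<exists>Y \<in> WB. magnus Y = word_series w \<and> beta2 (length w) (DB Y) = DD (Poly_Mapping.single w 1)"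
  using w
proof (induction "length w" arbitrary: w rule: less_induct)
  case less
  show ?case
  proof (cases "w = []")
    case True
    then show ?thesis
      using beta2_DeltaB_oneB[OF DB DD] WB_oneB magnus_oneB by auto
  next
    case False
    then obtain a v where wv: "w = gen_word a @ v" and v: "v = [] \<or> last v"
      using less.prems gen_word_decomposition by blast
    then obtain Y where Y: "Y \<in> WB" "magnus Y = word_series v"
      and beta2_Y: "beta2 (length v) (DB Y) = DD (Poly_Mapping.single v 1)"
      using less.hyps[of v] by auto
    have "beta2 (length w) (DB (mulB (aug_gen a) Y))
        = beta2 (Suc a + length v) (mulBB (DB (aug_gen a)) (DB Y))"
      by (simp add: wv DeltaB_mulB[OF DB] aug_gen_in_WB Y)
    also have "\<dots> = mulDD (beta2 (Suc a) (DB (aug_gen a))) (beta2 (length v) (DB Y))"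
      using filW_of_magnus_word_series[OF aug_gen_in_WB magnus_aug_gen, of a]
        filW_of_magnus_word_series[OF Y]
      by (intro beta2_mulBB) (auto intro: magnus2_DeltaB_vanish[OF DB])
    also have "\<dots> = DD (mulD (genD a) (Poly_Mapping.single v 1))"
      using v by (simp add: beta2_DeltaB_aug_gen[OF DB DD] beta2_Y DeltaDR_mulD[OF DD]
          genD_eq_single_gen_word single_in_WDR)
    also have "\<dots> = DD (Poly_Mapping.single w 1)"
      by (simp add: wv genD_eq_single_gen_word mulD_single)
    finally show ?thesis
      using Y by (intro bexI[of _ "mulB (aug_gen a) Y"])
        (simp_all add: WB_mulB aug_gen_in_WB magnus_mulB magnus_aug_gen series_mult_word_series wv)
  qed
qed

section \<open>Lifting the degree-\<open>n\<close> part of an element of \<open>F\<^sup>n W\<^sup>B\<close>\<close>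

definition WDR_words :: "nat \<Rightarrow> bool list set" where
  "WDR_words n = {w. length w = n \<and> (w = [] \<or> last w)}"

lemma finite_WDR_words: "finite (WDR_words n)"
  by (rule finite_subset[OF _ finite_words_eq[of n]]) (auto simp: WDR_words_def)

lemma beta1_WB: "x \<in> WB \<Longrightarrow> beta1 n x = (\<Sum>w\<in>WDR_words n. Poly_Mapping.single w (magnus x w))"
  by (rule poly_mapping_eqI)
     (simp add: lookup_beta1 lookup_sum lookup_single_if finite_WDR_words sum.delta',
      auto simp: WDR_words_def magnus_WB_not_last)

lemma filW_Suc_diff_lift:
  assumes x: "x \<in> filW n"
    and Y: "\<And>w. w \<in> WDR_words n \<Longrightarrow> Y w \<in> WB \<and> magnus (Y w) = word_series w"
  shows "x - (\<Sum>w\<in>WDR_words n. smult (magnus x w) (Y w)) \<in> filW (Suc n)"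
proof -
  let ?y = "\<Sum>w\<in>WDR_words n. smult (magnus x w) (Y w)"
  have xW: "x \<in> WB" and xV: "x \<in> filV n"
    using x by (simp_all add: filW_def)
  have yW: "?y \<in> WB"
    using Y by (intro WB_sum WB_smult) simp
  have "magnus ?y v = (if v \<in> WDR_words n then magnus x v else 0)" for v
    using Y finite_WDR_words by (simp add: magnus_sum magnus_smult word_series_def if_distrib cong: if_cong)
  then have "magnus (x - ?y) v = 0" if "length v \<le> n" for v
    using that magnus_vanish_filV[OF xV, of v] magnus_WB_not_last[OF xW, of v]
    by (cases "length v = n") (auto simp: magnus_diff WDR_words_def)
  then show ?thesis
    using xW yW by (simp add: filW_def filV_iff_magnus_vanish WB_diff WB_subset_VB less_Suc_eq_le)
qed

theorem corollary3p20:
  fixes DB :: "(letter list \<Rightarrow>\<^sub>0 'k::comm_ring_1) \<Rightarrow> (letter list \<times> letter list \<Rightarrow>\<^sub>0 'k)"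
    and DD :: "(bool list \<Rightarrow>\<^sub>0 'k) \<Rightarrow> (bool list \<times> bool list \<Rightarrow>\<^sub>0 'k)"
  assumes Qalg: "\<And>m::nat. m > 0 \<Longrightarrow> \<exists>u::'k. of_nat m * u = 1"
    and DB: "is_DeltaB DB"
    and DD: "is_DeltaDR DD"
  shows "\<forall>n. \<forall>x\<in>filW n. DD (beta1 n x) = beta2 n (DB x)"
proof (intro allI ballI)
  fix n and x :: "letter list \<Rightarrow>\<^sub>0 'k"
  assume x: "x \<in> filW n"
  have "\<forall>w\<in>WDR_words n. \<exists>Y. Y \<in> WB \<and> magnus Y = word_series w
      \<and> beta2 n (DB Y) = DD (Poly_Mapping.single w 1)"
    using beta2_DeltaB_lift_word[OF DB DD] by (auto simp: WDR_words_def)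
  then obtain Y where Y: "\<And>w. w \<in> WDR_words n \<Longrightarrow> Y w \<in> WB \<and> magnus (Y w) = word_series w
      \<and> beta2 n (DB (Y w)) = DD (Poly_Mapping.single w 1)"
    by metis
  define y where "y = (\<Sum>w\<in>WDR_words n. smult (magnus x w) (Y w))"
  have xW: "x \<in> WB" and yW: "y \<in> WB"
    using x Y by (auto simp: filW_def y_def intro!: WB_sum WB_smult)
  have "beta2 n (DB x) = beta2 n (DB (x - y)) + beta2 n (DB y)"
    using DeltaB_add[OF DB WB_diff[OF xW yW] yW] by (simp add: beta2_add)
  also have "beta2 n (DB (x - y)) = 0"
    using Y by (intro beta2_DeltaB_filW_Suc[OF DB]) (simp add: y_def filW_Suc_diff_lift[OF x])
  also have "beta2 n (DB y) = (\<Sum>w\<in>WDR_words n. smult (magnus x w) (DD (Poly_Mapping.single w 1)))"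
    using Y by (simp add: y_def DeltaB_lincomb[OF DB] beta2_sum beta2_smult)
  also have "\<dots> = DD (beta1 n x)"
    unfolding beta1_WB[OF xW] by (rule DeltaDR_sum_single[OF DD, symmetric]) (simp add: WDR_words_def)
  finally show "DD (beta1 n x) = beta2 n (DB x)"
    by simp
qed

end
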